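(* Let $N\trianglelefteq G\trianglelefteq H$ be finite groups with $N\trianglelefteq H$, let $b$ be an $H$-stable block of $kG$ covering a block $c$ of $kN$, let $I_H(c)=\{h\in H\mid{}^hc=c\}$, $I_G(c)=I_H(c)\cap G$, and let $\tilde b$ be the Fong correspondent of $b$ in $I_G(c)$. Then there exist a $p$-subgroup $P$ of $I_H(c)$ and a primitive idempotent $i$ of $(kI_G(c)\tilde b)^P$ such that: $P$ is maximal among $p$-subgroups $Q$ of $H$ with $\mathrm{Br}^G_Q(b)\ne0$; $P$ is maximal among $p$-subgroups $Q$ of $I_H(c)$ with $\mathrm{Br}^{I_G(c)}_Q(\tilde b)\neq0$; $i$ is a primitive idempotent of $(kGb)^P$; and $\mathrm{Br}^G_P(i)\ne0$. Thus $i$ is a source idempotent both of the $I_H(c)$-algebra $kI_G(c)\tilde b$ and of the $H$-algebra $kGb$.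
   Context: $k$ is an algebraically closed field of characteristic $p$; blocks are primitive idempotents of $Z(kG)$; $\mathrm{Br}^G_Q:(kG)^Q\to kC_G(Q)$ sends $\sum\alpha_gg$ to $\sum_{g\in C_G(Q)}\alpha_gg$. A block $b$ of $kG$ covers a block $c$ of $kN$ ($N\trianglelefteq G$) if $bc\ne 0$. The Fong correspondent of $b$ is the unique block $\tilde b$ of $kI_G(c)$ covering $c$ with $b=\mathrm{Tr}^G_{I_G(c)}(\tilde b)=\sum_{x\in[G/I_G(c)]}{}^x\tilde b$. A source idempotent of the $H$-algebra $kGb$ is a primitive idempotent $i\in(kGb)^P$ with $\mathrm{Br}^G_P(i)\ne0$, where $P\le H$ is a $p$-subgroup maximal with $\mathrm{Br}^G_P(b)\ne0$. *)

theory Defs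
  imports "HOL-Algebra.Coset" "HOL-Computational_Algebra.Polynomial"
begin

text \<open>Group algebras over a field k of subgroups A of an ambient finite group H are modelled as
  coefficient functions g => k supported in A (sum of alpha_g g corresponds to alpha).
  All multiplications are convolutions inside the ambient group H; kA is then a subalgebra.\<close>

definition grp_alg :: "('g, 'm) monoid_scheme \<Rightarrow> 'g set \<Rightarrow> ('g \<Rightarrow> 'k::field) set" where
  "grp_alg H A = {a. \<forall>x. x \<notin> A \<longrightarrow> a x = 0}"

definition ga_add :: "('g \<Rightarrow> 'k::field) \<Rightarrow> ('g \<Rightarrow> 'k) \<Rightarrow> ('g \<Rightarrow> 'k)" where
  "ga_add a b = (\<lambda>x. a x + b x)"

definition ga_mult :: "('g, 'm) monoid_scheme \<Rightarrow> ('g \<Rightarrow> 'k::field) \<Rightarrow> ('g \<Rightarrow> 'k) \<Rightarrow> ('g \<Rightarrow> 'k)" where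
  "ga_mult H a b = (\<lambda>x. if x \<in> carrier H
      then (\<Sum>y\<in>carrier H. a y * b (inv\<^bsub>H\<^esub> y \<otimes>\<^bsub>H\<^esub> x)) else 0)"

text \<open>Conjugation: ^h (sum alpha_g g) = sum alpha_g (h g h^-1).\<close>
definition ga_conj :: "('g, 'm) monoid_scheme \<Rightarrow> 'g \<Rightarrow> ('g \<Rightarrow> 'k::field) \<Rightarrow> ('g \<Rightarrow> 'k)" where
  "ga_conj H h a = (\<lambda>x. if x \<in> carrier H then a (inv\<^bsub>H\<^esub> h \<otimes>\<^bsub>H\<^esub> x \<otimes>\<^bsub>H\<^esub> h) else 0)"

definition ga_center :: "('g, 'm) monoid_scheme \<Rightarrow> 'g set \<Rightarrow> ('g \<Rightarrow> 'k::field) set" where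
  "ga_center H A = {z \<in> grp_alg H A. \<forall>a \<in> grp_alg H A. ga_mult H z a = ga_mult H a z}"

definition ga_idem :: "('g, 'm) monoid_scheme \<Rightarrow> ('g \<Rightarrow> 'k::field) \<Rightarrow> bool" where
  "ga_idem H e \<longleftrightarrow> ga_mult H e e = e"

definition prim_idem :: "('g, 'm) monoid_scheme \<Rightarrow> ('g \<Rightarrow> 'k::field) set \<Rightarrow> ('g \<Rightarrow> 'k) \<Rightarrow> bool" where
  "prim_idem H S e \<longleftrightarrow> e \<in> S \<and> e \<noteq> (\<lambda>_. 0) \<and> ga_idem H e \<and>
     (\<forall>e1\<in>S. \<forall>e2\<in>S. ga_idem H e1 \<and> ga_idem H e2 \<and> ga_mult H e1 e2 = (\<lambda>_. 0)
        \<and> ga_mult H e2 e1 = (\<lambda>_. 0) \<and> e = ga_add e1 e2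
        \<longrightarrow> e1 = (\<lambda>_. 0) \<or> e2 = (\<lambda>_. 0))"

definition is_block :: "('g, 'm) monoid_scheme \<Rightarrow> 'g set \<Rightarrow> ('g \<Rightarrow> 'k::field) \<Rightarrow> bool" where
  "is_block H A b \<longleftrightarrow> prim_idem H (ga_center H A) b"

definition ga_block_alg :: "('g, 'm) monoid_scheme \<Rightarrow> 'g set \<Rightarrow> ('g \<Rightarrow> 'k::field) \<Rightarrow> ('g \<Rightarrow> 'k) set" where
  "ga_block_alg H A e = {ga_mult H a e | a. a \<in> grp_alg H A}"

definition ga_fixed :: "('g, 'm) monoid_scheme \<Rightarrow> 'g set \<Rightarrow> ('g \<Rightarrow> 'k::field) set \<Rightarrow> ('g \<Rightarrow> 'k) set" where
  "ga_fixed H Q B = {a \<in> B. \<forall>q\<in>Q. ga_conj H q a = a}"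

definition centralizer_in :: "('g, 'm) monoid_scheme \<Rightarrow> 'g set \<Rightarrow> 'g set \<Rightarrow> 'g set" where
  "centralizer_in H A Q = {x \<in> A. \<forall>q\<in>Q. x \<otimes>\<^bsub>H\<^esub> q = q \<otimes>\<^bsub>H\<^esub> x}"

definition brauer :: "('g, 'm) monoid_scheme \<Rightarrow> 'g set \<Rightarrow> 'g set \<Rightarrow> ('g \<Rightarrow> 'k::field) \<Rightarrow> ('g \<Rightarrow> 'k)" where
  "brauer H A Q a = (\<lambda>x. if x \<in> centralizer_in H A Q then a x else 0)"

definition p_subgroup :: "nat \<Rightarrow> 'g set \<Rightarrow> ('g, 'm) monoid_scheme \<Rightarrow> bool" where
  "p_subgroup p Q H \<longleftrightarrow> subgroup Q H \<and> (\<exists>n. card Q = p ^ n)"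

definition max_brauer_pgroup :: "nat \<Rightarrow> ('g, 'm) monoid_scheme \<Rightarrow> 'g set \<Rightarrow> 'g set \<Rightarrow> ('g \<Rightarrow> 'k::field) \<Rightarrow> 'g set \<Rightarrow> bool" where
  "max_brauer_pgroup p H K A e P \<longleftrightarrow>
     p_subgroup p P H \<and> P \<subseteq> K \<and> brauer H A P e \<noteq> (\<lambda>_. 0) \<and>
     (\<forall>Q. p_subgroup p Q H \<and> Q \<subseteq> K \<and> P \<subseteq> Q \<and> brauer H A Q e \<noteq> (\<lambda>_. 0) \<longrightarrow> Q = P)"

definition inertia :: "('g, 'm) monoid_scheme \<Rightarrow> 'g set \<Rightarrow> ('g \<Rightarrow> 'k::field) \<Rightarrow> 'g set" where
  "inertia H K c = {h \<in> K. ga_conj H h c = c}"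

definition ga_trace :: "('g, 'm) monoid_scheme \<Rightarrow> 'g set \<Rightarrow> 'g set \<Rightarrow> ('g \<Rightarrow> 'k::field) \<Rightarrow> ('g \<Rightarrow> 'k)" where
  "ga_trace H A I e = (\<lambda>x. \<Sum>C\<in>{y <#\<^bsub>H\<^esub> I | y. y \<in> A}. ga_conj H (SOME y. y \<in> C) e x)"

end

theory Submission
  imports Defs "HOL-Library.Function_Algebras" "HOL-Algebra.Group_Action"
begin

text \<open>
  Choose a p-subgroup P of I_H(c) of maximal order with Br_P(bt) \<noteq> 0. Since b c = bt and
  b = \<Sum> ^x bt over G/I_G(c), a fixed-point count for p-groups acting in characteristic p
  gives two transfers: Br_P(bt) \<noteq> 0 implies Br_P(b) \<noteq> 0, and every p-subgroup Q of H
  with Br_Q(b) \<noteq> 0 has a conjugate Q' \<le> I_H(c) of the same order with Br_Q'(bt) \<noteq> 0.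
  Hence P is maximal in both senses. Among the idempotents of (kI_G(c) bt)^P that survive Br_P,
  one generating a right ideal of least dimension is primitive; it remains primitive in
  (kG b)^P because bt (kG b) bt \<subseteq> kI_G(c) bt, the products c g c vanishing for g \<notin> I_G(c).
\<close>

section \<open>Group-theoretic preliminaries\<close>

lemma of_nat_prime_power_eq_zero:
  assumes "CHAR('k::field) = p" "m > 0"
  shows "(of_nat (p ^ m) :: 'k) = 0"
proof -
  have "(of_nat p :: 'k) = 0" using assms(1) of_nat_CHAR[where 'a='k] by simp
  then show ?thesis using assms(2) by simp
qed

lemma (in group) group_actionI:
  assumes closed: "\<And>g x. g \<in> carrier G \<Longrightarrow> x \<in> E \<Longrightarrow> act g x \<in> E"
    and one: "\<And>x. x \<in> E \<Longrightarrow> act \<one> x = x"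
    and mult: "\<And>g h x. g \<in> carrier G \<Longrightarrow> h \<in> carrier G \<Longrightarrow> x \<in> E \<Longrightarrow> act (g \<otimes> h) x = act g (act h x)"
  shows "group_action G E (\<lambda>g. \<lambda>x\<in>E. act g x)"
proof -
  have inv_act: "act (inv g) (act g x) = x" if "g \<in> carrier G" "x \<in> E" for g x
    using mult[of "inv g" g x] one that by simp
  have bij: "(\<lambda>x\<in>E. act g x) \<in> Bij E" if g: "g \<in> carrier G" for g
  proof -
    have "bij_betw (act g) E E"
      by (rule bij_betw_byWitness[where f'="act (inv g)"])
         (use g inv_act[of "inv g"] inv_act[of g] closed in \<open>auto simp: image_subset_iff\<close>)
    then show ?thesis
      unfolding Bij_def by (simp add: bij_betw_cong[of E "\<lambda>x\<in>E. act g x" "act g"])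
  qed
  have "(\<lambda>g. \<lambda>x\<in>E. act g x) \<in> hom G (BijGroup E)"
  proof (rule homI)
    fix g h assume "g \<in> carrier G" "h \<in> carrier G"
    then show "(\<lambda>x\<in>E. act (g \<otimes> h) x) = (\<lambda>x\<in>E. act g x) \<otimes>\<^bsub>BijGroup E\<^esub> (\<lambda>x\<in>E. act h x)"
      using bij closed mult by (auto simp: BijGroup_def compose_def)
  qed (use bij in \<open>simp add: BijGroup_def\<close>)
  then show ?thesis
    by (intro group_action.intro group_hom.intro group_hom_axioms.intro is_group group_BijGroup)
qed

lemma (in group_action) card_orbit_prime_power:
  assumes "card (carrier G) = p ^ n" "prime p" "x \<in> E"
  shows "\<exists>m. card (orbit G \<phi> x) = p ^ m"
proof -
  have "card (orbit G \<phi> x) dvd Coset.order G"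
    using orbit_stabilizer_theorem[OF assms(3)] by (metis dvd_triv_left)
  then show ?thesis
    using assms by (auto simp: Coset.order_def divides_primepow_nat)
qed

lemma (in group_action) orbit_eq_singleton:
  assumes "x \<in> E" "\<forall>g\<in>carrier G. \<phi> g x = x"
  shows "orbit G \<phi> x = {x}"
  using assms orbit_refl[of x] by (auto simp: orbit_def)

text \<open>The orbit has length p^m with m > 0, and f is constant on it.\<close>
lemma (in group_action) sum_orbit_eq_zero:
  fixes f :: "'c \<Rightarrow> 'k::field"
  assumes p: "prime p" "CHAR('k) = p" and card: "card (carrier G) = p ^ n"
    and inv: "\<And>g y. g \<in> carrier G \<Longrightarrow> y \<in> E \<Longrightarrow> f (\<phi> g y) = f y"
    and x: "x \<in> E" "g \<in> carrier G" "\<phi> g x \<noteq> x"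
  shows "(\<Sum>y\<in>orbit G \<phi> x. f y) = 0"
proof -
  have "x \<in> orbit G \<phi> x" "\<phi> g x \<in> orbit G \<phi> x" using x orbit_refl by (auto simp: orbit_def)
  then have "card (orbit G \<phi> x) \<noteq> 1" using x(3) by (auto simp: card_1_singleton_iff)
  moreover obtain m where m: "card (orbit G \<phi> x) = p ^ m"
    using card_orbit_prime_power[OF card p(1) x(1)] by auto
  ultimately have "m > 0" by (cases m) auto
  have "(\<Sum>y\<in>orbit G \<phi> x. f y) = (\<Sum>y\<in>orbit G \<phi> x. f x)"
    by (rule sum.cong) (use x inv in \<open>auto simp: orbit_def\<close>)
  also have "\<dots> = of_nat (p ^ m) * f x" using m by simp
  also have "\<dots> = 0" using of_nat_prime_power_eq_zero[OF p(2) \<open>m > 0\<close>] by simp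
  finally show ?thesis .
qed

lemma (in group_action) sum_eq_sum_fixed_points:
  fixes f :: "'c \<Rightarrow> 'k::field"
  assumes p: "prime p" "CHAR('k) = p" and card: "card (carrier G) = p ^ n" and fin: "finite E"
    and inv: "\<And>g x. g \<in> carrier G \<Longrightarrow> x \<in> E \<Longrightarrow> f (\<phi> g x) = f x"
  shows "(\<Sum>x\<in>E. f x) = (\<Sum>x\<in>{x\<in>E. \<forall>g\<in>carrier G. \<phi> g x = x}. f x)"
proof -
  define Fix where "Fix = {x\<in>E. \<forall>g\<in>carrier G. \<phi> g x = x}"
  define f' where "f' = (\<lambda>x. if x \<in> Fix then f x else 0)"
  have orbit_sum: "(\<Sum>y\<in>Orb. f y) = (\<Sum>y\<in>Orb. f' y)" if Orb: "Orb \<in> orbits G E \<phi>" for Orb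
  proof -
    obtain x where x: "x \<in> E" "Orb = orbit G \<phi> x"
      using Orb unfolding orbits_def by auto
    show ?thesis
    proof (cases "x \<in> Fix")
      case True
      then show ?thesis using x orbit_eq_singleton by (simp add: f'_def Fix_def)
    next
      case False
      then obtain g where g: "g \<in> carrier G" "\<phi> g x \<noteq> x" using x by (auto simp: Fix_def)
      have "y \<notin> Fix" if "y \<in> Orb" for y
      proof
        assume "y \<in> Fix"
        then have "orbit G \<phi> y = {y}" by (simp add: orbit_eq_singleton Fix_def)
        moreover have "x \<in> orbit G \<phi> y" using \<open>y \<in> Fix\<close> that x orbit_sym by (auto simp: Fix_def)
        ultimately show False using \<open>y \<in> Fix\<close> \<open>x \<notin> Fix\<close> by simp
      qed
      moreover have "(\<Sum>y\<in>Orb. f y) = 0"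
        unfolding x(2) by (rule sum_orbit_eq_zero[where f = f, OF p card inv x(1) g])
      ultimately show ?thesis by (simp add: f'_def)
    qed
  qed
  have "(\<Sum>x\<in>E. f x) = (\<Sum>Orb\<in>orbits G E \<phi>. \<Sum>y\<in>Orb. f y)"
    by (rule disjoint_sum[OF fin, symmetric])
  also have "\<dots> = (\<Sum>Orb\<in>orbits G E \<phi>. \<Sum>y\<in>Orb. f' y)"
    by (rule sum.cong[OF refl orbit_sum])
  also have "\<dots> = (\<Sum>x\<in>E. f' x)" by (rule disjoint_sum[OF fin])
  also have "\<dots> = (\<Sum>x\<in>Fix. f x)" using fin by (simp add: f'_def Fix_def sum.inter_filter)
  finally show ?thesis by (simp add: Fix_def)
qed

lemma (in group) subgroup_sum_eq_sum_fixed_points: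
  fixes f :: "'x \<Rightarrow> 'k::field"
  assumes Q: "subgroup Q G" "card Q = p ^ n" and p: "prime p" "CHAR('k) = p" and fin: "finite X"
    and closed: "\<And>q x. q \<in> Q \<Longrightarrow> x \<in> X \<Longrightarrow> act q x \<in> X"
    and one: "\<And>x. x \<in> X \<Longrightarrow> act \<one> x = x"
    and mult: "\<And>q r x. q \<in> Q \<Longrightarrow> r \<in> Q \<Longrightarrow> x \<in> X \<Longrightarrow> act (q \<otimes> r) x = act q (act r x)"
    and inv: "\<And>q x. q \<in> Q \<Longrightarrow> x \<in> X \<Longrightarrow> f (act q x) = f x"
  shows "(\<Sum>x\<in>X. f x) = (\<Sum>x\<in>{x\<in>X. \<forall>q\<in>Q. act q x = x}. f x)"
proof -
  interpret Q: group "G\<lparr>carrier := Q\<rparr>" by (rule subgroup.subgroup_is_group[OF Q(1) is_group])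
  interpret A: group_action "G\<lparr>carrier := Q\<rparr>" X "\<lambda>q. \<lambda>x\<in>X. act q x"
    by (rule Q.group_actionI) (use closed one mult in auto)
  have "(\<Sum>x\<in>X. f x) = (\<Sum>x\<in>{x\<in>X. \<forall>q\<in>carrier (G\<lparr>carrier := Q\<rparr>). (\<lambda>x\<in>X. act q x) x = x}. f x)"
    by (rule A.sum_eq_sum_fixed_points[OF p _ fin]) (use Q(2) closed inv in auto)
  also have "{x\<in>X. \<forall>q\<in>carrier (G\<lparr>carrier := Q\<rparr>). (\<lambda>x\<in>X. act q x) x = x} = {x\<in>X. \<forall>q\<in>Q. act q x = x}"
    by auto
  finally show ?thesis .
qed

lemma (in group) conjugate_subgroup:
  assumes Q: "subgroup Q G" and x: "x \<in> carrier G"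
  shows "subgroup ((\<lambda>q. inv x \<otimes> q \<otimes> x) ` Q) G"
    and "card ((\<lambda>q. inv x \<otimes> q \<otimes> x) ` Q) = card Q"
proof -
  have QG: "Q \<subseteq> carrier G" by (rule subgroup.subset[OF Q])
  have "(\<lambda>q. inv x \<otimes> q \<otimes> x) ` Q = inv x <# Q #> x"
    using QG x by (auto simp: l_coset_def r_coset_def m_assoc)
  then show "subgroup ((\<lambda>q. inv x \<otimes> q \<otimes> x) ` Q) G"
    using subgroup_conjugation_is_surj1[OF x Q] by simp
  have "inj_on (\<lambda>q. inv x \<otimes> q \<otimes> x) Q"
  proof (rule inj_onI)
    fix q r assume qr: "q \<in> Q" "r \<in> Q" and eq: "inv x \<otimes> q \<otimes> x = inv x \<otimes> r \<otimes> x"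
    then show "q = r"
      using conjugation_is_surj[of x q] conjugation_is_surj[of x r] qr QG x by auto
  qed
  then show "card ((\<lambda>q. inv x \<otimes> q \<otimes> x) ` Q) = card Q" by (rule card_image)
qed

section \<open>Group algebras\<close>

lemma (in vector_space) dim_less_if_not_subset:
  assumes W: "finite W" and V: "V \<subseteq> span W" and UV: "U \<subseteq> V" and U: "subspace U"
    and v: "v \<in> V" "v \<notin> U"
  shows "dim U < dim V"
proof -
  obtain B where B: "B \<subseteq> U" "independent B" "U \<subseteq> span B" "card B = dim U"
    by (rule basis_exists)
  obtain B' where B': "B' \<subseteq> V" "independent B'" "V \<subseteq> span B'" "card B' = dim V"
    by (rule basis_exists)
  have finB': "finite B'" using independent_span_bound[OF W B'(2)] B'(1) V by auto
  have "v \<notin> span B" using span_minimal[OF B(1) U] v by auto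
  then have ind: "independent (insert v B)" by (rule independent_insertI[OF _ B(2)])
  have "insert v B \<subseteq> span B'" using B(1) UV v(1) B'(3) by auto
  note bound = independent_span_bound[OF finB' ind this]
  moreover have "v \<notin> B" using B(1) v(2) by auto
  ultimately show ?thesis using B(4) B'(4) by (auto simp: card_insert_if)
qed

interpretation fun_vs: vector_space "\<lambda>(r::'k::field) (f::'a \<Rightarrow> 'k) x. r * f x"
  by unfold_locales (simp_all add: fun_eq_iff algebra_simps)

lemma sum_fun_apply: "(\<Sum>a\<in>A. f a) x = (\<Sum>a\<in>A. f a x)"
  by (induction A rule: infinite_finite_induct) auto

definition ga_delta :: "'g \<Rightarrow> 'g \<Rightarrow> 'k::field" where
  "ga_delta g = (\<lambda>x. if x = g then 1 else 0)"

lemma ga_delta_in_grp_alg: "g \<in> A \<Longrightarrow> ga_delta g \<in> grp_alg H A"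
  by (simp add: ga_delta_def grp_alg_def)

lemma mem_grp_alg_iff: "a \<in> grp_alg H A \<longleftrightarrow> (\<forall>x. x \<notin> A \<longrightarrow> a x = 0)"
  by (simp add: grp_alg_def)

lemma grp_alg_mono: "A \<subseteq> B \<Longrightarrow> a \<in> grp_alg H A \<Longrightarrow> a \<in> grp_alg H B"
  by (auto simp: grp_alg_def)

lemma grp_alg_eq_sum_delta:
  assumes "a \<in> grp_alg H A" "finite A"
  shows "a = (\<lambda>x. \<Sum>g\<in>A. a g * ga_delta g x)"
proof (rule ext)
  fix x
  have "(\<Sum>g\<in>A. a g * ga_delta g x) = (\<Sum>g\<in>A. if g = x then a x else 0)"
    by (rule sum.cong) (auto simp: ga_delta_def)
  also have "\<dots> = a x" using assms by (auto simp: mem_grp_alg_iff)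
  finally show "a x = (\<Sum>g\<in>A. a g * ga_delta g x)" by simp
qed

lemma brauer_add: "brauer H A Q (ga_add a d) = ga_add (brauer H A Q a) (brauer H A Q d)"
  by (rule ext) (simp add: brauer_def ga_add_def)

lemma brauer_zero: "brauer H A Q (\<lambda>_. 0) = (\<lambda>_. 0)"
  by (rule ext) (simp add: brauer_def)

lemma brauer_neq_zero_iff:
  "brauer H A Q a \<noteq> (\<lambda>_. 0) \<longleftrightarrow> (\<exists>g\<in>centralizer_in H A Q. a g \<noteq> 0)"
  by (auto simp: brauer_def fun_eq_iff)

lemma brauer_nonzero_mono:
  assumes "A \<subseteq> B" "brauer H A Q a \<noteq> (\<lambda>_. 0)"
  shows "brauer H B Q a \<noteq> (\<lambda>_. 0)"
  using assms by (auto simp: brauer_neq_zero_iff centralizer_in_def)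

lemma prim_idemI:
  assumes "e \<in> S" "e \<noteq> (\<lambda>_. 0)" "ga_idem H e"
    and "\<And>e1 e2. e1 \<in> S \<Longrightarrow> e2 \<in> S \<Longrightarrow> ga_idem H e1 \<Longrightarrow> ga_idem H e2
      \<Longrightarrow> ga_mult H e1 e2 = (\<lambda>_. 0) \<Longrightarrow> ga_mult H e2 e1 = (\<lambda>_. 0) \<Longrightarrow> e = ga_add e1 e2
      \<Longrightarrow> e1 \<noteq> (\<lambda>_. 0) \<Longrightarrow> e2 \<noteq> (\<lambda>_. 0) \<Longrightarrow> False"
  shows "prim_idem H S e"
  using assms unfolding prim_idem_def by blast

lemma prim_idemD:
  assumes "prim_idem H S e"
  shows "e \<in> S" "e \<noteq> (\<lambda>_. 0)" "ga_idem H e"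
    and "\<And>e1 e2. e1 \<in> S \<Longrightarrow> e2 \<in> S \<Longrightarrow> ga_idem H e1 \<Longrightarrow> ga_idem H e2
      \<Longrightarrow> ga_mult H e1 e2 = (\<lambda>_. 0) \<Longrightarrow> ga_mult H e2 e1 = (\<lambda>_. 0) \<Longrightarrow> e = ga_add e1 e2
      \<Longrightarrow> e1 = (\<lambda>_. 0) \<or> e2 = (\<lambda>_. 0)"
  using assms unfolding prim_idem_def by blast+

locale finite_group = group H for H :: "'g monoid" (structure) +
  assumes finite_carrier: "finite (carrier H)"
begin

lemma mult_inv_cancel_left [simp]: "x \<in> carrier H \<Longrightarrow> y \<in> carrier H \<Longrightarrow> x \<otimes> (inv x \<otimes> y) = y"
  by (simp add: m_assoc[symmetric])

lemma inv_mult_cancel_left [simp]: "x \<in> carrier H \<Longrightarrow> y \<in> carrier H \<Longrightarrow> inv x \<otimes> (x \<otimes> y) = y"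
  by (simp add: m_assoc[symmetric])

lemma sum_carrier_left_mult:
  assumes "y \<in> carrier H"
  shows "(\<Sum>w\<in>carrier H. f (y \<otimes> w)) = (\<Sum>z\<in>carrier H. f z)"
  by (rule sum.reindex_bij_witness[where i="\<lambda>z. inv y \<otimes> z" and j="\<lambda>w. y \<otimes> w"])
     (use assms in \<open>auto simp: m_assoc[symmetric]\<close>)

lemma sum_carrier_conj:
  assumes "h \<in> carrier H"
  shows "(\<Sum>w\<in>carrier H. f (h \<otimes> w \<otimes> inv h)) = (\<Sum>z\<in>carrier H. f z)"
  by (rule sum.reindex_bij_witness[where i="\<lambda>z. inv h \<otimes> z \<otimes> h" and j="\<lambda>w. h \<otimes> w \<otimes> inv h"])
     (use assms in \<open>auto simp: m_assoc\<close>)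

lemma sum_carrier_mult_inv:
  assumes "x \<in> carrier H"
  shows "(\<Sum>y\<in>carrier H. f (x \<otimes> inv y)) = (\<Sum>z\<in>carrier H. f z)"
  by (rule sum.reindex_bij_witness[where i="\<lambda>z. inv z \<otimes> x" and j="\<lambda>y. x \<otimes> inv y"])
     (use assms in \<open>auto simp: m_assoc inv_mult_group\<close>)

lemma ga_mult_outside: "x \<notin> carrier H \<Longrightarrow> ga_mult H a b x = 0"
  by (simp add: ga_mult_def)

lemma ga_mult_apply:
  "x \<in> carrier H \<Longrightarrow> ga_mult H a b x = (\<Sum>y\<in>carrier H. a y * b (inv y \<otimes> x))"
  by (simp add: ga_mult_def)

lemma ga_mult_assoc: "ga_mult H (ga_mult H a b) d = ga_mult H a (ga_mult H b d)"
proof (rule ext)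
  fix x
  show "ga_mult H (ga_mult H a b) d x = ga_mult H a (ga_mult H b d) x"
  proof (cases "x \<in> carrier H")
    case True
    have "ga_mult H (ga_mult H a b) d x
        = (\<Sum>z\<in>carrier H. (\<Sum>y\<in>carrier H. a y * b (inv y \<otimes> z)) * d (inv z \<otimes> x))"
      using True by (simp add: ga_mult_apply)
    also have "\<dots> = (\<Sum>y\<in>carrier H. a y * (\<Sum>z\<in>carrier H. b (inv y \<otimes> z) * d (inv z \<otimes> x)))"
      unfolding sum_distrib_left sum_distrib_right mult.assoc by (rule sum.swap)
    also have "\<dots> = (\<Sum>y\<in>carrier H. a y * (\<Sum>w\<in>carrier H. b w * d (inv w \<otimes> (inv y \<otimes> x))))"
    proof (rule sum.cong[OF refl])
      fix y assume y: "y \<in> carrier H"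
      have "(\<Sum>z\<in>carrier H. b (inv y \<otimes> z) * d (inv z \<otimes> x))
          = (\<Sum>w\<in>carrier H. b (inv y \<otimes> (y \<otimes> w)) * d (inv (y \<otimes> w) \<otimes> x))"
        using sum_carrier_left_mult[OF y, of "\<lambda>z. b (inv y \<otimes> z) * d (inv z \<otimes> x)"] by simp
      also have "\<dots> = (\<Sum>w\<in>carrier H. b w * d (inv w \<otimes> (inv y \<otimes> x)))"
        by (rule sum.cong[OF refl]) (use y True in \<open>simp add: m_assoc[symmetric] inv_mult_group\<close>)
      finally show "a y * (\<Sum>z\<in>carrier H. b (inv y \<otimes> z) * d (inv z \<otimes> x))
          = a y * (\<Sum>w\<in>carrier H. b w * d (inv w \<otimes> (inv y \<otimes> x)))" by simp
    qed
    also have "\<dots> = ga_mult H a (ga_mult H b d) x"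
      using True by (simp add: ga_mult_apply)
    finally show ?thesis .
  qed (simp add: ga_mult_outside)
qed

lemma ga_mult_in_grp_alg_carrier: "ga_mult H a b \<in> grp_alg H (carrier H)"
  by (simp add: grp_alg_def ga_mult_def)

lemma ga_mult_closed:
  assumes A: "subgroup A H" and a: "a \<in> grp_alg H A" and b: "b \<in> grp_alg H A"
  shows "ga_mult H a b \<in> grp_alg H A"
  unfolding mem_grp_alg_iff
proof (intro allI impI)
  fix x assume x: "x \<notin> A"
  show "ga_mult H a b x = 0"
  proof (cases "x \<in> carrier H")
    case True
    have "a y * b (inv y \<otimes> x) = 0" if y: "y \<in> carrier H" for y
    proof (cases "y \<in> A")
      case yA: True
      have "inv y \<otimes> x \<notin> A"
      proof
        assume "inv y \<otimes> x \<in> A"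
        then have "y \<otimes> (inv y \<otimes> x) \<in> A" by (rule subgroup.m_closed[OF A yA])
        then show False using x y True by (simp add: m_assoc[symmetric])
      qed
      then show ?thesis using b by (simp add: mem_grp_alg_iff)
    qed (use a in \<open>simp add: mem_grp_alg_iff\<close>)
    then have "(\<Sum>y\<in>carrier H. a y * b (inv y \<otimes> x)) = 0" by (intro sum.neutral) auto
    then show ?thesis using True by (simp add: ga_mult_apply)
  qed (simp add: ga_mult_outside)
qed

lemma ga_mult_zero_left [simp]: "ga_mult H (\<lambda>_. 0) a = (\<lambda>_. 0)"
  by (rule ext) (simp add: ga_mult_def)

lemma ga_mult_zero_right [simp]: "ga_mult H a (\<lambda>_. 0) = (\<lambda>_. 0)"
  by (rule ext) (simp add: ga_mult_def)

lemma ga_mult_add_left: "ga_mult H (ga_add a b) d = ga_add (ga_mult H a d) (ga_mult H b d)"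
  by (rule ext) (simp add: ga_mult_def ga_add_def distrib_right sum.distrib)

lemma ga_mult_add_right: "ga_mult H d (ga_add a b) = ga_add (ga_mult H d a) (ga_mult H d b)"
  by (rule ext) (simp add: ga_mult_def ga_add_def distrib_left sum.distrib)

lemma ga_mult_diff_left:
  "ga_mult H (\<lambda>x. a x - b x) d = (\<lambda>x. ga_mult H a d x - ga_mult H b d x)"
  by (rule ext) (simp add: ga_mult_def left_diff_distrib sum_subtractf)

lemma ga_mult_diff_right:
  "ga_mult H d (\<lambda>x. a x - b x) = (\<lambda>x. ga_mult H d a x - ga_mult H d b x)"
  by (rule ext) (simp add: ga_mult_def right_diff_distrib sum_subtractf)

lemma ga_mult_scale_left: "ga_mult H (\<lambda>x. r * a x) d = (\<lambda>x. r * ga_mult H a d x)"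
  by (rule ext) (simp add: ga_mult_def sum_distrib_left mult.assoc)

lemma ga_mult_scale_right: "ga_mult H d (\<lambda>x. r * a x) = (\<lambda>x. r * ga_mult H d a x)"
  by (rule ext) (simp add: ga_mult_def sum_distrib_left mult.assoc mult.left_commute)

lemma ga_mult_sum_left:
  "ga_mult H (\<lambda>x. \<Sum>i\<in>S. f i x) d = (\<lambda>x. \<Sum>i\<in>S. ga_mult H (f i) d x)"
proof (rule ext)
  fix x
  have "(\<Sum>y\<in>carrier H. (\<Sum>i\<in>S. f i y) * d (inv y \<otimes> x))
      = (\<Sum>i\<in>S. \<Sum>y\<in>carrier H. f i y * d (inv y \<otimes> x))"
    unfolding sum_distrib_right by (rule sum.swap)
  then show "ga_mult H (\<lambda>x. \<Sum>i\<in>S. f i x) d x = (\<Sum>i\<in>S. ga_mult H (f i) d x)"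
    by (simp add: ga_mult_def)
qed

lemma ga_mult_sum_right:
  "ga_mult H d (\<lambda>x. \<Sum>i\<in>S. f i x) = (\<lambda>x. \<Sum>i\<in>S. ga_mult H d (f i) x)"
proof (rule ext)
  fix x
  have "(\<Sum>y\<in>carrier H. d y * (\<Sum>i\<in>S. f i (inv y \<otimes> x)))
      = (\<Sum>i\<in>S. \<Sum>y\<in>carrier H. d y * f i (inv y \<otimes> x))"
    unfolding sum_distrib_left by (rule sum.swap)
  then show "ga_mult H d (\<lambda>x. \<Sum>i\<in>S. f i x) x = (\<Sum>i\<in>S. ga_mult H d (f i) x)"
    by (simp add: ga_mult_def)
qed

lemma ga_mult_delta_left:
  assumes "g \<in> carrier H"
  shows "ga_mult H (ga_delta g) a = (\<lambda>x. if x \<in> carrier H then a (inv g \<otimes> x) else 0)"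
proof (rule ext)
  fix x
  have "(\<Sum>y\<in>carrier H. ga_delta g y * a (inv y \<otimes> x))
      = (\<Sum>y\<in>carrier H. if y = g then a (inv g \<otimes> x) else 0)"
    by (rule sum.cong) (auto simp: ga_delta_def)
  then show "ga_mult H (ga_delta g) a x = (if x \<in> carrier H then a (inv g \<otimes> x) else 0)"
    using assms by (simp add: ga_mult_def finite_carrier)
qed

lemma ga_mult_delta_right:
  assumes g: "g \<in> carrier H"
  shows "ga_mult H a (ga_delta g) = (\<lambda>x. if x \<in> carrier H then a (x \<otimes> inv g) else 0)"
proof (rule ext)
  fix x
  show "ga_mult H a (ga_delta g) x = (if x \<in> carrier H then a (x \<otimes> inv g) else 0)"
  proof (cases "x \<in> carrier H")
    case True
    have "inv y \<otimes> x = g \<longleftrightarrow> y = x \<otimes> inv g" if y: "y \<in> carrier H" for y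
    proof
      assume "inv y \<otimes> x = g"
      then have "y \<otimes> g = x" using y True by (auto simp: m_assoc[symmetric])
      then show "y = x \<otimes> inv g" using y g by (auto simp: m_assoc)
    qed (use y True g in \<open>simp add: inv_mult_group m_assoc\<close>)
    then have "(\<Sum>y\<in>carrier H. a y * ga_delta g (inv y \<otimes> x))
        = (\<Sum>y\<in>carrier H. if y = x \<otimes> inv g then a y else 0)"
      by (intro sum.cong) (auto simp: ga_delta_def)
    then show ?thesis using True g by (simp add: ga_mult_apply finite_carrier)
  qed (simp add: ga_mult_outside)
qed

lemma ga_conj_mult:
  assumes h: "h \<in> carrier H"
  shows "ga_conj H h (ga_mult H a b) = ga_mult H (ga_conj H h a) (ga_conj H h b)"
proof (rule ext)
  fix x
  show "ga_conj H h (ga_mult H a b) x = ga_mult H (ga_conj H h a) (ga_conj H h b) x"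
  proof (cases "x \<in> carrier H")
    case True
    have "ga_mult H (ga_conj H h a) (ga_conj H h b) x
        = (\<Sum>y\<in>carrier H. a (inv h \<otimes> y \<otimes> h) * b (inv h \<otimes> (inv y \<otimes> x) \<otimes> h))"
      using True h by (simp add: ga_mult_apply ga_conj_def)
    also have "\<dots> = (\<Sum>w\<in>carrier H. a (inv h \<otimes> (h \<otimes> w \<otimes> inv h) \<otimes> h)
        * b (inv h \<otimes> (inv (h \<otimes> w \<otimes> inv h) \<otimes> x) \<otimes> h))"
      using sum_carrier_conj[OF h, of "\<lambda>y. a (inv h \<otimes> y \<otimes> h) * b (inv h \<otimes> (inv y \<otimes> x) \<otimes> h)"]
      by simp
    also have "\<dots> = (\<Sum>w\<in>carrier H. a w * b (inv w \<otimes> (inv h \<otimes> x \<otimes> h)))"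
      by (rule sum.cong[OF refl]) (use h True in \<open>simp add: m_assoc inv_mult_group\<close>)
    also have "\<dots> = ga_conj H h (ga_mult H a b) x"
      using True h by (simp add: ga_mult_apply ga_conj_def)
    finally show ?thesis by simp
  qed (simp add: ga_conj_def ga_mult_outside)
qed

lemma ga_conj_conj:
  "h \<in> carrier H \<Longrightarrow> k \<in> carrier H \<Longrightarrow> ga_conj H h (ga_conj H k a) = ga_conj H (h \<otimes> k) a"
  by (intro ext) (simp add: ga_conj_def m_assoc inv_mult_group)

lemma ga_conj_one: "a \<in> grp_alg H (carrier H) \<Longrightarrow> ga_conj H \<one> a = a"
  by (intro ext) (simp add: ga_conj_def mem_grp_alg_iff)

lemma ga_conj_inv_conj:
  "h \<in> carrier H \<Longrightarrow> a \<in> grp_alg H (carrier H) \<Longrightarrow> ga_conj H (inv h) (ga_conj H h a) = a"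
  by (simp add: ga_conj_conj ga_conj_one)

lemma ga_conj_zero [simp]: "ga_conj H h (\<lambda>_. 0) = (\<lambda>_. 0)"
  by (rule ext) (simp add: ga_conj_def)

lemma ga_conj_add: "ga_conj H h (ga_add a b) = ga_add (ga_conj H h a) (ga_conj H h b)"
  by (rule ext) (simp add: ga_conj_def ga_add_def)

lemma ga_conj_diff: "ga_conj H h (\<lambda>x. a x - b x) = (\<lambda>x. ga_conj H h a x - ga_conj H h b x)"
  by (rule ext) (simp add: ga_conj_def)

lemma ga_conj_in_grp_alg_carrier: "ga_conj H h a \<in> grp_alg H (carrier H)"
  by (simp add: ga_conj_def grp_alg_def)

lemma ga_conj_in_grp_alg_normal:
  assumes "A \<lhd> H" "h \<in> carrier H" "a \<in> grp_alg H A"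
  shows "ga_conj H h a \<in> grp_alg H A"
proof -
  have "x \<in> A" if "x \<in> carrier H" "inv h \<otimes> x \<otimes> h \<in> A" for x
  proof -
    have "h \<otimes> (inv h \<otimes> x \<otimes> h) \<otimes> inv h \<in> A"
      using normal.inv_op_closed2[OF assms(1)] that assms(2) by metis
    then show ?thesis using that assms(2) by (simp add: m_assoc)
  qed
  then show ?thesis using assms(3) by (auto simp: mem_grp_alg_iff ga_conj_def)
qed

lemma ga_conj_eq_zero_iff:
  "h \<in> carrier H \<Longrightarrow> a \<in> grp_alg H (carrier H) \<Longrightarrow> ga_conj H h a = (\<lambda>_. 0) \<longleftrightarrow> a = (\<lambda>_. 0)"
  by (metis ga_conj_inv_conj ga_conj_zero)

lemma ga_conj_fixed_apply:
  assumes "h \<in> carrier H" "x \<in> carrier H" "ga_conj H (inv h) a = a"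
  shows "a (h \<otimes> x \<otimes> inv h) = a x"
proof -
  have "ga_conj H (inv h) a x = a x" using assms(3) by simp
  then show ?thesis using assms(1,2) by (simp add: ga_conj_def)
qed

lemma ga_conj_idem: "h \<in> carrier H \<Longrightarrow> ga_idem H a \<Longrightarrow> ga_idem H (ga_conj H h a)"
  by (simp add: ga_idem_def ga_conj_mult[symmetric])

lemma ga_mult_delta_commute:
  "g \<in> carrier H \<Longrightarrow> ga_mult H (ga_delta g) a = ga_mult H (ga_conj H g a) (ga_delta g)"
  by (intro ext) (simp add: ga_mult_delta_left ga_mult_delta_right ga_conj_def m_assoc)

lemma ga_conj_center:
  assumes "A \<subseteq> carrier H" "z \<in> ga_center H A" "y \<in> A"
  shows "ga_conj H y z = z"
proof (rule ext)
  fix x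
  have zA: "z \<in> grp_alg H A"
    and comm: "ga_mult H z (ga_delta y) = ga_mult H (ga_delta y) z"
    using assms ga_delta_in_grp_alg[OF assms(3)] by (auto simp: ga_center_def)
  have y: "y \<in> carrier H" using assms by auto
  show "ga_conj H y z x = z x"
  proof (cases "x \<in> carrier H")
    case True
    have "ga_mult H z (ga_delta y) (x \<otimes> y) = ga_mult H (ga_delta y) z (x \<otimes> y)"
      using comm by simp
    then show ?thesis
      using True y by (simp add: ga_mult_delta_left ga_mult_delta_right ga_conj_def m_assoc)
  qed (use zA assms(1) in \<open>auto simp: ga_conj_def mem_grp_alg_iff\<close>)
qed

lemma ga_mult_commute_if_support_fixes:
  assumes "\<And>y. a y \<noteq> 0 \<Longrightarrow> y \<in> carrier H \<and> ga_conj H y z = z"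
  shows "ga_mult H a z = ga_mult H z a"
proof (rule ext)
  fix x
  show "ga_mult H a z x = ga_mult H z a x"
  proof (cases "x \<in> carrier H")
    case True
    have "a y * z (inv y \<otimes> x) = a y * z (x \<otimes> inv y)" if y: "y \<in> carrier H" for y
    proof (cases "a y = 0")
      case False
      then have "ga_conj H y z (x \<otimes> inv y) = z (x \<otimes> inv y)" using assms by simp
      then show ?thesis using y True by (simp add: ga_conj_def m_assoc)
    qed simp
    then have "(\<Sum>y\<in>carrier H. a y * z (inv y \<otimes> x)) = (\<Sum>y\<in>carrier H. a y * z (x \<otimes> inv y))"
      by (rule sum.cong[OF refl])
    then have "ga_mult H a z x = (\<Sum>y\<in>carrier H. a y * z (x \<otimes> inv y))"
      using True by (simp add: ga_mult_apply)
    also have "\<dots> = (\<Sum>y\<in>carrier H. z (x \<otimes> inv y) * a (inv (x \<otimes> inv y) \<otimes> x))"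
      by (rule sum.cong[OF refl]) (use True in \<open>simp add: inv_mult_group m_assoc mult.commute\<close>)
    also have "\<dots> = (\<Sum>w\<in>carrier H. z w * a (inv w \<otimes> x))"
      by (rule sum_carrier_mult_inv[OF True])
    finally show ?thesis using True by (simp add: ga_mult_apply)
  qed (simp add: ga_mult_outside)
qed

lemma mem_ga_centerI:
  fixes z :: "'g \<Rightarrow> 'k::field"
  assumes "A \<subseteq> carrier H" "z \<in> grp_alg H A" "\<And>y. y \<in> A \<Longrightarrow> ga_conj H y z = z"
  shows "z \<in> ga_center H A"
  unfolding ga_center_def
proof (safe intro!: assms(2))
  fix a :: "'g \<Rightarrow> 'k" assume "a \<in> grp_alg H A"
  then have "\<And>y. a y \<noteq> 0 \<Longrightarrow> y \<in> carrier H \<and> ga_conj H y z = z"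
    using assms by (auto simp: mem_grp_alg_iff)
  from ga_mult_commute_if_support_fixes[OF this] show "ga_mult H z a = ga_mult H a z" by simp
qed

lemma ga_center_subset: "z \<in> ga_center H A \<Longrightarrow> z \<in> grp_alg H A"
  by (simp add: ga_center_def)

lemma ga_center_commute: "z \<in> ga_center H A \<Longrightarrow> a \<in> grp_alg H A \<Longrightarrow> ga_mult H z a = ga_mult H a z"
  by (simp add: ga_center_def)

lemma ga_center_mult_closed:
  assumes A: "subgroup A H" and z: "z \<in> ga_center H A" and w: "w \<in> ga_center H A"
  shows "ga_mult H z w \<in> ga_center H A"
proof (rule mem_ga_centerI)
  show AH: "A \<subseteq> carrier H" by (rule subgroup.subset[OF A])
  show "ga_mult H z w \<in> grp_alg H A"
    by (rule ga_mult_closed[OF A ga_center_subset[OF z] ga_center_subset[OF w]])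
  fix y assume "y \<in> A"
  then show "ga_conj H y (ga_mult H z w) = ga_mult H z w"
    using AH by (auto simp: ga_conj_mult ga_conj_center[OF AH z] ga_conj_center[OF AH w])
qed

lemma ga_center_diff_closed:
  assumes A: "subgroup A H" and z: "z \<in> ga_center H A" and w: "w \<in> ga_center H A"
  shows "(\<lambda>x. z x - w x) \<in> ga_center H A"
proof (rule mem_ga_centerI)
  show AH: "A \<subseteq> carrier H" by (rule subgroup.subset[OF A])
  show "(\<lambda>x. z x - w x) \<in> grp_alg H A"
    using ga_center_subset[OF z] ga_center_subset[OF w] by (simp add: mem_grp_alg_iff)
  fix y assume "y \<in> A"
  then show "ga_conj H y (\<lambda>x. z x - w x) = (\<lambda>x. z x - w x)"
    by (simp add: ga_conj_diff ga_conj_center[OF AH z] ga_conj_center[OF AH w])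
qed

lemma ga_center_conj_normal:
  assumes A: "A \<lhd> H" and h: "h \<in> carrier H" and z: "z \<in> ga_center H A"
  shows "ga_conj H h z \<in> ga_center H A"
proof (rule mem_ga_centerI)
  show AH: "A \<subseteq> carrier H" using normal_imp_subgroup[OF A] by (rule subgroup.subset)
  show "ga_conj H h z \<in> grp_alg H A"
    by (rule ga_conj_in_grp_alg_normal[OF A h ga_center_subset[OF z]])
  fix y assume y: "y \<in> A"
  then have "inv h \<otimes> y \<otimes> h \<in> A" using normal.inv_op_closed1[OF A] h by blast
  have y': "inv h \<otimes> y \<otimes> h \<in> carrier H" "y \<in> carrier H" using y AH h by auto
  have "ga_conj H y (ga_conj H h z) = ga_conj H (h \<otimes> (inv h \<otimes> y \<otimes> h)) z"
    using y' h by (simp add: ga_conj_conj m_assoc)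
  also have "\<dots> = ga_conj H h (ga_conj H (inv h \<otimes> y \<otimes> h) z)"
    using y' h by (simp add: ga_conj_conj)
  also have "ga_conj H (inv h \<otimes> y \<otimes> h) z = z" by (rule ga_conj_center[OF AH z \<open>inv h \<otimes> y \<otimes> h \<in> A\<close>])
  finally show "ga_conj H y (ga_conj H h z) = ga_conj H h z" .
qed

lemma orthogonal_idem_sum_absorb:
  assumes "ga_idem H e1" "ga_mult H e2 e1 = (\<lambda>_. 0)" "ga_mult H e1 e2 = (\<lambda>_. 0)"
    and "e = ga_add e1 e2"
  shows "ga_mult H e e1 = e1" "ga_mult H e1 e = e1"
  using assms ga_mult_add_left[of e1 e2 e1] ga_mult_add_right[of e1 e1 e2]
  by (simp_all add: ga_add_def ga_idem_def)

end

section \<open>Blocks, Brauer maps and primitive idempotents\<close>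

context finite_group
begin

lemma is_blockD:
  assumes "is_block H A e"
  shows "e \<in> ga_center H A" "e \<noteq> (\<lambda>_. 0)" "ga_mult H e e = e"
  using prim_idemD[OF assms[unfolded is_block_def]] by (auto simp: ga_idem_def)

text \<open>e f and e - e f are orthogonal central idempotents with sum e.\<close>
lemma block_mult_central_idem:
  assumes A: "subgroup A H" and e: "is_block H A e"
    and f: "f \<in> ga_center H A" and ff: "ga_mult H f f = f"
  shows "ga_mult H e f = (\<lambda>_. 0) \<or> ga_mult H e f = e"
proof -
  have eZ: "e \<in> ga_center H A" and ee: "ga_mult H e e = e" using is_blockD[OF e] by auto
  have fe: "ga_mult H f e = ga_mult H e f"
    by (rule ga_center_commute[OF f ga_center_subset[OF eZ]])
  define e1 where "e1 = ga_mult H e f"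
  define e2 where "e2 = (\<lambda>x. e x - e1 x)"
  have e1Z: "e1 \<in> ga_center H A" unfolding e1_def by (rule ga_center_mult_closed[OF A eZ f])
  have e2Z: "e2 \<in> ga_center H A" unfolding e2_def by (rule ga_center_diff_closed[OF A eZ e1Z])
  have ee1: "ga_mult H e e1 = e1" unfolding e1_def by (simp add: ga_mult_assoc[symmetric] ee)
  have e1e: "ga_mult H e1 e = e1"
    unfolding e1_def ga_mult_assoc fe by (simp add: ga_mult_assoc[symmetric] ee)
  have e1e1: "ga_mult H e1 e1 = e1"
    using ee1 ff fe unfolding e1_def by (metis ga_mult_assoc)
  have e1e2: "ga_mult H e1 e2 = (\<lambda>_. 0)" unfolding e2_def by (simp add: ga_mult_diff_right e1e e1e1)
  have e2e1: "ga_mult H e2 e1 = (\<lambda>_. 0)" unfolding e2_def by (simp add: ga_mult_diff_left ee1 e1e1)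
  have e2e2: "ga_mult H e2 e2 = e2"
    unfolding e2_def by (simp add: ga_mult_diff_left ga_mult_diff_right ee e1e ee1 e1e1)
  have "e = ga_add e1 e2" by (simp add: ga_add_def e2_def)
  then have "e1 = (\<lambda>_. 0) \<or> e2 = (\<lambda>_. 0)"
    using prim_idemD(4)[OF e[unfolded is_block_def] e1Z e2Z] e1e1 e2e2 e1e2 e2e1
    by (simp add: ga_idem_def)
  moreover have "e2 = (\<lambda>_. 0) \<Longrightarrow> e1 = e" by (auto simp: e2_def fun_eq_iff)
  ultimately show ?thesis unfolding e1_def by auto
qed

lemma blocks_orthogonal:
  assumes A: "subgroup A H" and e: "is_block H A e" and f: "is_block H A f" and "e \<noteq> f"
  shows "ga_mult H e f = (\<lambda>_. 0)"
proof -
  have comm: "ga_mult H e f = ga_mult H f e"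
    using ga_center_commute[OF is_blockD(1)[OF e] ga_center_subset[OF is_blockD(1)[OF f]]] .
  then show ?thesis
    using block_mult_central_idem[OF A e is_blockD(1,3)[OF f]]
      block_mult_central_idem[OF A f is_blockD(1,3)[OF e]] \<open>e \<noteq> f\<close> by auto
qed

lemma is_block_conj_normal:
  fixes e :: "'g \<Rightarrow> 'k::field"
  assumes A: "A \<lhd> H" and h: "h \<in> carrier H" and e: "is_block H A e"
  shows "is_block H A (ga_conj H h e)"
  unfolding is_block_def
proof (rule prim_idemI)
  have AH: "A \<subseteq> carrier H" using normal_imp_subgroup[OF A] by (rule subgroup.subset)
  have in_carrier: "a \<in> grp_alg H (carrier H)" if "a \<in> ga_center H A" for a :: "'g \<Rightarrow> 'k"
    using ga_center_subset[OF that] AH grp_alg_mono by blast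
  have eZ: "e \<in> ga_center H A" using is_blockD[OF e] by simp
  show "ga_conj H h e \<in> ga_center H A" by (rule ga_center_conj_normal[OF A h eZ])
  show "ga_conj H h e \<noteq> (\<lambda>_. 0)"
    using ga_conj_eq_zero_iff[OF h in_carrier[OF eZ]] is_blockD(2)[OF e] by simp
  show "ga_idem H (ga_conj H h e)"
    using ga_conj_idem[OF h] is_blockD(3)[OF e] by (simp add: ga_idem_def)
  fix e1 e2 assume e12: "e1 \<in> ga_center H A" "e2 \<in> ga_center H A" "ga_idem H e1" "ga_idem H e2"
    "ga_mult H e1 e2 = (\<lambda>_. 0)" "ga_mult H e2 e1 = (\<lambda>_. 0)" "ga_conj H h e = ga_add e1 e2"
    and nz: "e1 \<noteq> (\<lambda>_. 0)" "e2 \<noteq> (\<lambda>_. 0)"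
  have hi: "inv h \<in> carrier H" using h by simp
  have "ga_conj H (inv h) e1 = (\<lambda>_. 0) \<or> ga_conj H (inv h) e2 = (\<lambda>_. 0)"
  proof (rule prim_idemD(4)[OF e[unfolded is_block_def]])
    show "ga_conj H (inv h) e1 \<in> ga_center H A" "ga_conj H (inv h) e2 \<in> ga_center H A"
      using ga_center_conj_normal[OF A hi] e12(1,2) by auto
    show "ga_idem H (ga_conj H (inv h) e1)" "ga_idem H (ga_conj H (inv h) e2)"
      using ga_conj_idem[OF hi] e12(3,4) by auto
    show "ga_mult H (ga_conj H (inv h) e1) (ga_conj H (inv h) e2) = (\<lambda>_. 0)"
      "ga_mult H (ga_conj H (inv h) e2) (ga_conj H (inv h) e1) = (\<lambda>_. 0)"
      using e12(5,6) by (simp_all add: ga_conj_mult[OF hi, symmetric])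
    show "e = ga_add (ga_conj H (inv h) e1) (ga_conj H (inv h) e2)"
      using ga_conj_inv_conj[OF h in_carrier[OF eZ]] e12(7) by (simp add: ga_conj_add)
  qed
  then show False using ga_conj_eq_zero_iff[OF hi] in_carrier e12 nz by auto
qed

lemma inertia_subgroup:
  assumes K: "subgroup K H" and c: "c \<in> grp_alg H (carrier H)"
  shows "subgroup (inertia H K c) H"
proof
  have KH: "K \<subseteq> carrier H" by (rule subgroup.subset[OF K])
  then show "inertia H K c \<subseteq> carrier H" by (auto simp: inertia_def)
  show "\<one> \<in> inertia H K c" using subgroup.one_closed[OF K] by (simp add: inertia_def ga_conj_one[OF c])
  fix x y assume x: "x \<in> inertia H K c" and y: "y \<in> inertia H K c"
  then have "x \<in> carrier H" "y \<in> carrier H" using KH by (auto simp: inertia_def)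
  then show "x \<otimes> y \<in> inertia H K c"
    using x y subgroup.m_closed[OF K] by (auto simp: inertia_def ga_conj_conj[symmetric])
next
  fix x assume x: "x \<in> inertia H K c"
  then have "x \<in> carrier H" "ga_conj H x c = c"
    using subgroup.subset[OF K] by (auto simp: inertia_def)
  then have "ga_conj H (inv x) c = c" using ga_conj_inv_conj[OF _ c, of x] by simp
  then show "inv x \<in> inertia H K c"
    using x subgroup.m_inv_closed[OF K] by (auto simp: inertia_def)
qed

lemma brauer_one_subgroup:
  assumes "A \<subseteq> carrier H" "a \<in> grp_alg H A"
  shows "brauer H A {\<one>} a = a"
  using assms by (auto simp: brauer_def centralizer_in_def mem_grp_alg_iff fun_eq_iff)

lemma ex_max_card_brauer_pgroup:
  assumes "\<one> \<in> K" "brauer H A {\<one>} e \<noteq> (\<lambda>_. 0)"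
  obtains P where "p_subgroup p P H" "P \<subseteq> K" "brauer H A P e \<noteq> (\<lambda>_. 0)"
    "\<And>Q. p_subgroup p Q H \<Longrightarrow> Q \<subseteq> K \<Longrightarrow> brauer H A Q e \<noteq> (\<lambda>_. 0) \<Longrightarrow> card Q \<le> card P"
proof -
  define good where "good Q \<longleftrightarrow> p_subgroup p Q H \<and> Q \<subseteq> K \<and> brauer H A Q e \<noteq> (\<lambda>_. 0)" for Q
  have "good {\<one>}"
    using assms triv_subgroup by (auto simp: good_def p_subgroup_def intro: exI[of _ 0])
  moreover have "card Q < Suc (card (carrier H))" if "good Q" for Q
  proof -
    have "Q \<subseteq> carrier H" using that subgroup.subset by (auto simp: good_def p_subgroup_def)
    then show ?thesis using card_mono[OF finite_carrier] by (simp add: le_imp_less_Suc)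
  qed
  ultimately obtain P where "good P" "\<forall>Q. good Q \<longrightarrow> card Q \<le> card P"
    using ex_has_greatest_nat[of good "{\<one>}" card] by blast
  then show ?thesis using that unfolding good_def by blast
qed

lemma max_brauer_pgroupI:
  assumes P: "p_subgroup p P H" "P \<subseteq> K" "brauer H A P e \<noteq> (\<lambda>_. 0)"
    and max: "\<And>Q. p_subgroup p Q H \<Longrightarrow> Q \<subseteq> K \<Longrightarrow> brauer H A Q e \<noteq> (\<lambda>_. 0) \<Longrightarrow> card Q \<le> card P"
  shows "max_brauer_pgroup p H K A e P"
  unfolding max_brauer_pgroup_def
proof (intro conjI allI impI P)
  fix Q assume Q: "p_subgroup p Q H \<and> Q \<subseteq> K \<and> P \<subseteq> Q \<and> brauer H A Q e \<noteq> (\<lambda>_. 0)"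
  then have "finite Q"
    using finite_subset[OF subgroup.subset finite_carrier] by (auto simp: p_subgroup_def)
  then show "Q = P" using Q max card_subset_eq[of Q P] card_mono[of Q P] by (metis le_antisym)
qed

lemma subspace_range_ga_mult:
  fixes a :: "'g \<Rightarrow> 'k::field"
  shows "fun_vs.subspace (range (ga_mult H a))"
proof (rule fun_vs.subspaceI)
  have "ga_mult H a (\<lambda>_. 0) = 0" by (simp add: zero_fun_def)
  then show "0 \<in> range (ga_mult H a)" by (metis rangeI)
next
  fix x y assume "x \<in> range (ga_mult H a)" "y \<in> range (ga_mult H a)"
  then show "x + y \<in> range (ga_mult H a)"
    using ga_mult_add_right[of a] by (auto simp: ga_add_def plus_fun_def) (metis rangeI)
next
  fix r :: 'k and x assume "x \<in> range (ga_mult H a)"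
  then obtain u where "x = ga_mult H a u" by auto
  then have "(\<lambda>z. r * x z) = ga_mult H a (\<lambda>z. r * u z)" by (simp add: ga_mult_scale_right)
  then show "(\<lambda>z. r * x z) \<in> range (ga_mult H a)" by simp
qed

lemma range_ga_mult_subset_span:
  fixes a :: "'g \<Rightarrow> 'k::field"
  shows "range (ga_mult H a) \<subseteq> fun_vs.span (ga_delta ` carrier H)"
proof
  fix f :: "'g \<Rightarrow> 'k" assume "f \<in> range (ga_mult H a)"
  then have "f = (\<lambda>x. \<Sum>g\<in>carrier H. f g * ga_delta g x)"
    using grp_alg_eq_sum_delta ga_mult_in_grp_alg_carrier finite_carrier by blast
  also have "\<dots> = (\<Sum>g\<in>carrier H. (\<lambda>x. f g * ga_delta g x))"
    by (rule ext) (simp add: sum_fun_apply)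
  also have "\<dots> \<in> fun_vs.span (ga_delta ` carrier H)"
    by (intro fun_vs.span_sum fun_vs.span_scale fun_vs.span_base) auto
  finally show "f \<in> fun_vs.span (ga_delta ` carrier H)" .
qed

lemma dim_range_ga_mult_less:
  assumes e: "ga_mult H e e = e" and f1: "ga_idem H f1" and f2: "ga_idem H f2" "f2 \<noteq> (\<lambda>_. 0)"
    and orth: "ga_mult H f1 f2 = (\<lambda>_. 0)" "ga_mult H f2 f1 = (\<lambda>_. 0)" and sum: "e = ga_add f1 f2"
  shows "fun_vs.dim (range (ga_mult H f1)) < fun_vs.dim (range (ga_mult H e))"
proof (rule fun_vs.dim_less_if_not_subset[where W = "ga_delta ` carrier H"])
  have ef1: "ga_mult H e f1 = f1" by (rule orthogonal_idem_sum_absorb(1)[OF f1 orth(2,1) sum])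
  have f2e: "ga_mult H f2 e = f2"
    by (rule orthogonal_idem_sum_absorb(2)[OF f2(1) orth(1,2)]) (simp add: sum ga_add_def add.commute)
  show "range (ga_mult H f1) \<subseteq> range (ga_mult H e)"
    using ef1 by (auto simp: ga_mult_assoc[symmetric]) (metis ga_mult_assoc rangeI)
  show "e \<in> range (ga_mult H e)" using e by (metis rangeI)
  show "e \<notin> range (ga_mult H f1)"
  proof
    assume "e \<in> range (ga_mult H f1)"
    then obtain u where "e = ga_mult H f1 u" by auto
    then have "f2 = ga_mult H (ga_mult H f2 f1) u" using f2e by (simp add: ga_mult_assoc)
    then show False using orth(2) f2(2) by simp
  qed
qed (use finite_carrier subspace_range_ga_mult range_ga_mult_subset_span in auto)

text \<open>Choose, among the idempotents of S not killed by the Brauer map, one whose right ideal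
  has least dimension; it cannot split, since one of the summands survives the Brauer map.\<close>
lemma ex_prim_idem_brauer_nonzero:
  assumes "e \<in> S" "ga_idem H e" "brauer H A P e \<noteq> (\<lambda>_. 0)"
  shows "\<exists>i. prim_idem H S i \<and> brauer H A P i \<noteq> (\<lambda>_. 0)"
proof -
  define good where "good i \<longleftrightarrow> i \<in> S \<and> ga_idem H i \<and> brauer H A P i \<noteq> (\<lambda>_. 0)" for i
  obtain i where i: "good i" and min: "\<And>j. good j \<Longrightarrow>
      fun_vs.dim (range (ga_mult H i)) \<le> fun_vs.dim (range (ga_mult H j))"
    using ex_has_least_nat[of good e "\<lambda>i. fun_vs.dim (range (ga_mult H i))"] assms
    unfolding good_def by blast
  have "prim_idem H S i"
  proof (rule prim_idemI)
    show "i \<in> S" "ga_idem H i" using i by (auto simp: good_def)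
    show "i \<noteq> (\<lambda>_. 0)" using i brauer_zero by (auto simp: good_def)
    fix e1 e2 assume e12: "e1 \<in> S" "e2 \<in> S" "ga_idem H e1" "ga_idem H e2"
      "ga_mult H e1 e2 = (\<lambda>_. 0)" "ga_mult H e2 e1 = (\<lambda>_. 0)" "i = ga_add e1 e2"
      and nz: "e1 \<noteq> (\<lambda>_. 0)" "e2 \<noteq> (\<lambda>_. 0)"
    have ii: "ga_mult H i i = i" using i by (simp add: good_def ga_idem_def)
    have "brauer H A P i = ga_add (brauer H A P e1) (brauer H A P e2)"
      using e12(7) by (simp add: brauer_add)
    then have "good e1 \<or> good e2" using i e12 by (auto simp: good_def ga_add_def)
    moreover have "i = ga_add e2 e1" using e12(7) by (auto simp: ga_add_def add.commute)
    ultimately show False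
      using min dim_range_ga_mult_less[OF ii] e12 nz not_le by metis
  qed
  then show ?thesis using i unfolding good_def by blast
qed

lemma prim_idem_corner:
  assumes i: "prim_idem H S i" "i \<in> T"
    and corner: "\<And>f. f \<in> T \<Longrightarrow> ga_mult H i f = f \<Longrightarrow> ga_mult H f i = f \<Longrightarrow> f \<in> S"
  shows "prim_idem H T i"
proof (rule prim_idemI)
  show "i \<in> T" "i \<noteq> (\<lambda>_. 0)" "ga_idem H i" using i(2) prim_idemD(2,3)[OF i(1)] by auto
  fix e1 e2 assume e12: "e1 \<in> T" "e2 \<in> T" "ga_idem H e1" "ga_idem H e2"
    "ga_mult H e1 e2 = (\<lambda>_. 0)" "ga_mult H e2 e1 = (\<lambda>_. 0)" "i = ga_add e1 e2"
    and nz: "e1 \<noteq> (\<lambda>_. 0)" "e2 \<noteq> (\<lambda>_. 0)"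
  have "i = ga_add e2 e1" using e12(7) by (auto simp: ga_add_def add.commute)
  then have "e1 \<in> S" "e2 \<in> S"
    using corner e12 orthogonal_idem_sum_absorb[of e1 e2 i] orthogonal_idem_sum_absorb[of e2 e1 i]
    by auto
  then show False using prim_idemD(4)[OF i(1)] e12 nz by blast
qed

end

section \<open>The Fong correspondent\<close>

locale fong_setting = finite_group H for H :: "'g monoid" (structure) +
  fixes G N :: "'g set" and p :: nat and b c bt :: "'g \<Rightarrow> 'k::field"
  assumes prime_p: "prime p" and char_p: "CHAR('k) = p"
    and G_normal: "G \<lhd> H" and N_normal: "N \<lhd> H" and N_subset_G: "N \<subseteq> G"
    and block_b: "is_block H G b" and b_stable: "\<forall>h\<in>carrier H. ga_conj H h b = b"
    and block_c: "is_block H N c"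
    and block_bt: "is_block H (inertia H G c) bt" and bt_covers_c: "ga_mult H bt c \<noteq> (\<lambda>_. 0)"
    and b_trace: "b = ga_trace H G (inertia H G c) bt"
begin

abbreviation "I \<equiv> inertia H G c"
abbreviation "IH \<equiv> inertia H (carrier H) c"

lemma G_subgroup: "subgroup G H"
  using G_normal by (rule normal_imp_subgroup)

lemma G_subset_carrier: "G \<subseteq> carrier H"
  by (rule subgroup.subset[OF G_subgroup])

lemma N_subset_carrier: "N \<subseteq> carrier H"
  using N_subset_G G_subset_carrier by blast

lemma c_center: "c \<in> ga_center H N"
  using is_blockD[OF block_c] by simp

lemma c_in_grp_alg_carrier: "c \<in> grp_alg H (carrier H)"
  using ga_center_subset[OF c_center] N_subset_carrier grp_alg_mono by blast

lemma c_idem: "ga_mult H c c = c"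
  using is_blockD[OF block_c] by simp

lemma I_subgroup: "subgroup I H"
  by (rule inertia_subgroup[OF G_subgroup c_in_grp_alg_carrier])

lemma IH_subgroup: "subgroup IH H"
  by (rule inertia_subgroup[OF subgroup_self c_in_grp_alg_carrier])

lemma I_subset_G: "I \<subseteq> G"
  by (auto simp: inertia_def)

lemma I_subset_carrier: "I \<subseteq> carrier H"
  using I_subset_G G_subset_carrier by blast

lemma N_subset_I: "N \<subseteq> I"
  using N_subset_G ga_conj_center[OF N_subset_carrier c_center] by (auto simp: inertia_def)

lemma c_in_grp_alg_I: "c \<in> grp_alg H I"
  using ga_center_subset[OF c_center] N_subset_I grp_alg_mono by blast

lemma c_center_I: "c \<in> ga_center H I"
  by (rule mem_ga_centerI[OF I_subset_carrier c_in_grp_alg_I]) (simp add: inertia_def)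

lemma bt_center: "bt \<in> ga_center H I"
  using is_blockD[OF block_bt] by simp

lemma bt_in_grp_alg_I: "bt \<in> grp_alg H I"
  by (rule ga_center_subset[OF bt_center])

lemma bt_in_grp_alg_carrier: "bt \<in> grp_alg H (carrier H)"
  using bt_in_grp_alg_I I_subset_carrier grp_alg_mono by blast

lemma bt_idem: "ga_mult H bt bt = bt"
  using is_blockD[OF block_bt] by simp

lemma bt_nonzero: "bt \<noteq> (\<lambda>_. 0)"
  using is_blockD[OF block_bt] by simp

lemma b_center: "b \<in> ga_center H G"
  using is_blockD[OF block_b] by simp

lemma bt_mult_c: "ga_mult H bt c = bt"
  using block_mult_central_idem[OF I_subgroup block_bt c_center_I c_idem] bt_covers_c by simp

lemma c_mult_bt: "ga_mult H c bt = bt"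
  using ga_center_commute[OF bt_center c_in_grp_alg_I] bt_mult_c by simp

lemma conj_c_mult_conj_c:
  assumes "x \<in> carrier H" "y \<in> carrier H" "ga_conj H x c \<noteq> ga_conj H y c"
  shows "ga_mult H (ga_conj H x c) (ga_conj H y c) = (\<lambda>_. 0)"
  by (rule blocks_orthogonal[OF normal_imp_subgroup[OF N_normal]
        is_block_conj_normal[OF N_normal assms(1) block_c]
        is_block_conj_normal[OF N_normal assms(2) block_c] assms(3)])

text \<open>Distinct conjugates of c are orthogonal blocks of kN, and ^x bt lies below ^x c.\<close>
lemma conj_bt_mult_conj_c:
  assumes x: "x \<in> carrier H" and y: "y \<in> carrier H"
  shows "ga_mult H (ga_conj H x bt) (ga_conj H y c)
    = (if ga_conj H x c = ga_conj H y c then ga_conj H x bt else (\<lambda>_. 0))"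
proof -
  have xbt: "ga_conj H x bt = ga_mult H (ga_conj H x bt) (ga_conj H x c)"
    using ga_conj_mult[OF x, of bt c] bt_mult_c by simp
  have prod: "ga_mult H (ga_conj H x bt) (ga_conj H y c)
      = ga_mult H (ga_conj H x bt) (ga_mult H (ga_conj H x c) (ga_conj H y c))"
    by (subst xbt) (simp add: ga_mult_assoc)
  show ?thesis
  proof (cases "ga_conj H x c = ga_conj H y c")
    case True
    then have "ga_mult H (ga_conj H x c) (ga_conj H y c) = ga_conj H x c"
      using ga_conj_mult[OF x, of c c] c_idem by simp
    then show ?thesis using prod xbt True by simp
  next
    case False
    then show ?thesis using prod conj_c_mult_conj_c[OF x y] by simp
  qed
qed

definition I_cosets :: "'g set set" where
  "I_cosets = {y <#\<^bsub>H\<^esub> I | y. y \<in> G}"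

definition coset_rep :: "'g set \<Rightarrow> 'g" where
  "coset_rep C = (SOME y. y \<in> C)"

lemma coset_rep:
  assumes C: "C \<in> I_cosets"
  shows "coset_rep C \<in> C" "coset_rep C \<in> G" "C = coset_rep C <#\<^bsub>H\<^esub> I"
proof -
  obtain y where y: "y \<in> G" "C = y <#\<^bsub>H\<^esub> I" using C by (auto simp: I_cosets_def)
  have yH: "y \<in> carrier H" using y G_subset_carrier by auto
  have "y \<in> C" using y subgroup.one_closed[OF I_subgroup] yH by (force simp: l_coset_def)
  then show rep: "coset_rep C \<in> C" unfolding coset_rep_def by (rule someI)
  then have "y <#\<^bsub>H\<^esub> I = coset_rep C <#\<^bsub>H\<^esub> I"
    using y(2) by (intro l_repr_independence[OF _ yH I_subgroup]) simp
  then show "C = coset_rep C <#\<^bsub>H\<^esub> I" using y(2) by simp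
  obtain h where "h \<in> I" "coset_rep C = y \<otimes> h" using rep y(2) by (auto simp: l_coset_def)
  then show "coset_rep C \<in> G" using y(1) I_subset_G subgroup.m_closed[OF G_subgroup] by auto
qed

lemma I_in_I_cosets: "I \<in> I_cosets"
  using lcos_mult_one[OF I_subset_carrier] subgroup.one_closed[OF G_subgroup]
  by (force simp: I_cosets_def)

lemma coset_rep_in_I_iff:
  assumes "C \<in> I_cosets"
  shows "coset_rep C \<in> I \<longleftrightarrow> C = I"
proof
  assume "coset_rep C \<in> I"
  then have "\<one> <#\<^bsub>H\<^esub> I = coset_rep C <#\<^bsub>H\<^esub> I"
    by (intro l_repr_independence[OF _ one_closed I_subgroup])
       (simp add: lcos_mult_one[OF I_subset_carrier])
  then show "C = I" using coset_rep(3)[OF assms] lcos_mult_one[OF I_subset_carrier] by simp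
qed (use coset_rep(1)[OF assms] in blast)

lemma finite_I_cosets: "finite I_cosets"
proof -
  have "I_cosets \<subseteq> Pow (carrier H)"
    using G_subset_carrier I_subset_carrier by (auto simp: I_cosets_def l_coset_def)
  then show ?thesis using finite_carrier finite_subset by blast
qed

lemma b_eq_sum_conj_bt: "b = (\<lambda>x. \<Sum>C\<in>I_cosets. ga_conj H (coset_rep C) bt x)"
  using b_trace by (simp add: ga_trace_def I_cosets_def coset_rep_def)

lemma b_mult: "ga_mult H b a = (\<lambda>x. \<Sum>C\<in>I_cosets. ga_mult H (ga_conj H (coset_rep C) bt) a x)"
  by (subst b_eq_sum_conj_bt) (rule ga_mult_sum_left)

lemma b_mult_c: "ga_mult H b c = bt"
proof (rule ext)
  fix x
  have "ga_mult H b c x = (\<Sum>C\<in>I_cosets. if C = I then bt x else 0)"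
    unfolding b_mult
  proof (rule sum.cong[OF refl])
    fix C assume C: "C \<in> I_cosets"
    have r: "coset_rep C \<in> carrier H" using coset_rep(2)[OF C] G_subset_carrier by auto
    have "ga_conj H (coset_rep C) c = c \<longleftrightarrow> C = I"
      using coset_rep_in_I_iff[OF C] coset_rep(2)[OF C] by (simp add: inertia_def)
    moreover have "C = I \<Longrightarrow> ga_conj H (coset_rep C) bt = bt"
      using ga_conj_center[OF I_subset_carrier bt_center] coset_rep_in_I_iff[OF C] by simp
    ultimately show "ga_mult H (ga_conj H (coset_rep C) bt) c x = (if C = I then bt x else 0)"
      using conj_bt_mult_conj_c[OF r one_closed] ga_conj_one[OF c_in_grp_alg_carrier] by auto
  qed
  also have "\<dots> = bt x" using finite_I_cosets I_in_I_cosets by simp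
  finally show "ga_mult H b c x = bt x" .
qed

lemma IH_fixes_bt: "h \<in> IH \<Longrightarrow> ga_conj H h bt = bt"
  using ga_conj_mult[of h b c] b_stable b_mult_c by (simp add: inertia_def)

lemma b_mult_conj_c: "x \<in> carrier H \<Longrightarrow> ga_mult H b (ga_conj H x c) = ga_conj H x bt"
  using ga_conj_mult[of x b c] b_stable b_mult_c by simp

lemma bt_mult_b: "ga_mult H bt b = bt"
proof -
  have "ga_mult H bt b = ga_mult H b bt"
    using ga_center_commute[OF b_center grp_alg_mono[OF I_subset_G bt_in_grp_alg_I]] by simp
  also have "\<dots> = ga_mult H (ga_mult H b c) bt" by (simp add: ga_mult_assoc c_mult_bt)
  also have "\<dots> = bt" by (simp add: b_mult_c bt_idem)
  finally show ?thesis .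
qed

text \<open>bt(g) = (b c)(g) is a sum over y of b(y) c(y^-1 g); for g centralizing P the summands are
  invariant under conjugation of y by P, so only y centralizing P contribute.\<close>
lemma bt_apply_eq_sum_centralizing:
  assumes P: "subgroup P H" "card P = p ^ n" "P \<subseteq> IH"
    and g: "g \<in> carrier H" "\<And>q. q \<in> P \<Longrightarrow> g \<otimes> q = q \<otimes> g"
  shows "bt g = (\<Sum>y\<in>{y\<in>carrier H. \<forall>q\<in>P. q \<otimes> y \<otimes> inv q = y}. b y * c (inv y \<otimes> g))"
proof -
  have PH: "P \<subseteq> carrier H" by (rule subgroup.subset[OF P(1)])
  have "bt g = (\<Sum>y\<in>carrier H. b y * c (inv y \<otimes> g))"
    using ga_mult_apply[OF g(1), of b c] by (simp add: b_mult_c)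
  also have "\<dots> = (\<Sum>y\<in>{y\<in>carrier H. \<forall>q\<in>P. q \<otimes> y \<otimes> inv q = y}. b y * c (inv y \<otimes> g))"
  proof (rule subgroup_sum_eq_sum_fixed_points[OF P(1,2) prime_p char_p finite_carrier])
    fix q y assume q: "q \<in> P" and y: "y \<in> carrier H"
    have qH: "q \<in> carrier H" and "inv q \<in> IH" using q PH P(3) subgroup.m_inv_closed[OF P(1)] by auto
    then have "ga_conj H (inv q) c = c" by (simp add: inertia_def)
    moreover have "inv (q \<otimes> y \<otimes> inv q) \<otimes> g = q \<otimes> (inv y \<otimes> g) \<otimes> inv q"
      using qH y g(1) g(2)[OF subgroup.m_inv_closed[OF P(1) q]] by (simp add: inv_mult_group m_assoc)
    ultimately have "c (inv (q \<otimes> y \<otimes> inv q) \<otimes> g) = c (inv y \<otimes> g)"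
      using ga_conj_fixed_apply[OF qH, of "inv y \<otimes> g" c] y g(1) by simp
    moreover have "b (q \<otimes> y \<otimes> inv q) = b y"
      using ga_conj_fixed_apply[OF qH y, of b] b_stable qH by simp
    ultimately show "b (q \<otimes> y \<otimes> inv q) * c (inv (q \<otimes> y \<otimes> inv q) \<otimes> g) = b y * c (inv y \<otimes> g)"
      by simp
  next
    fix q r y assume "q \<in> P" "r \<in> P" and y: "y \<in> carrier H"
    then have "q \<in> carrier H" "r \<in> carrier H" using PH by auto
    then show "q \<otimes> r \<otimes> y \<otimes> inv (q \<otimes> r) = q \<otimes> (r \<otimes> y \<otimes> inv r) \<otimes> inv q"
      using y by (simp add: m_assoc inv_mult_group)
  qed (use PH in auto)
  finally show ?thesis .
qed

lemma brauer_b_nonzero: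
  assumes P: "p_subgroup p P H" "P \<subseteq> IH" and br: "brauer H I P bt \<noteq> (\<lambda>_. 0)"
  shows "brauer H G P b \<noteq> (\<lambda>_. 0)"
proof -
  obtain n where Psub: "subgroup P H" and card: "card P = p ^ n"
    using P(1) by (auto simp: p_subgroup_def)
  obtain g where g: "g \<in> centralizer_in H I P" "bt g \<noteq> 0"
    using br by (auto simp: brauer_neq_zero_iff)
  have "g \<in> carrier H" "\<And>q. q \<in> P \<Longrightarrow> g \<otimes> q = q \<otimes> g"
    using g I_subset_carrier by (auto simp: centralizer_in_def)
  then have "(\<Sum>y\<in>{y\<in>carrier H. \<forall>q\<in>P. q \<otimes> y \<otimes> inv q = y}. b y * c (inv y \<otimes> g)) \<noteq> 0"
    using bt_apply_eq_sum_centralizing[OF Psub card P(2)] g(2) by simp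
  then obtain y where "y \<in> {y\<in>carrier H. \<forall>q\<in>P. q \<otimes> y \<otimes> inv q = y}" "b y * c (inv y \<otimes> g) \<noteq> 0"
    by (rule sum.not_neutral_contains_not_neutral)
  then have y: "y \<in> carrier H" "\<And>q. q \<in> P \<Longrightarrow> q \<otimes> y \<otimes> inv q = y" and "b y \<noteq> 0" by auto
  moreover have "y \<in> G"
    using \<open>b y \<noteq> 0\<close> ga_center_subset[OF b_center] by (auto simp: mem_grp_alg_iff)
  moreover have "y \<otimes> q = q \<otimes> y" if q: "q \<in> P" for q
  proof -
    have "q \<in> carrier H" using q subgroup.subset[OF Psub] by auto
    then have "q \<otimes> y \<otimes> inv q \<otimes> q = q \<otimes> y" using y(1) by (simp add: m_assoc)
    then show ?thesis using y(2)[OF q] by simp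
  qed
  ultimately show ?thesis by (auto simp: brauer_neq_zero_iff centralizer_in_def)
qed

lemma conj_c_eq_conj_by_G:
  assumes q: "q \<in> carrier H"
  shows "\<exists>x\<in>G. ga_conj H q c = ga_conj H x c"
proof (rule ccontr)
  assume none: "\<not> (\<exists>x\<in>G. ga_conj H q c = ga_conj H x c)"
  have "ga_mult H (ga_conj H (coset_rep C) bt) (ga_conj H q c) = (\<lambda>_. 0)" if "C \<in> I_cosets" for C
  proof -
    have "coset_rep C \<in> G" by (rule coset_rep(2)[OF that])
    then show ?thesis
      using none conj_bt_mult_conj_c[OF _ q] G_subset_carrier by (metis subsetD)
  qed
  then have "ga_mult H b (ga_conj H q c) = (\<lambda>_. 0)" by (simp add: b_mult)
  moreover have "ga_conj H q bt \<noteq> (\<lambda>_. 0)"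
    using ga_conj_eq_zero_iff[OF q bt_in_grp_alg_carrier] bt_nonzero by simp
  ultimately show False using b_mult_conj_c[OF q] by simp
qed

lemma inj_on_conj_c_coset_rep: "inj_on (\<lambda>C. ga_conj H (coset_rep C) c) I_cosets"
proof (rule inj_onI)
  fix C D assume C: "C \<in> I_cosets" and D: "D \<in> I_cosets"
    and eq: "ga_conj H (coset_rep C) c = ga_conj H (coset_rep D) c"
  have rC: "coset_rep C \<in> G" and rD: "coset_rep D \<in> G" using coset_rep C D by auto
  then have rCH: "coset_rep C \<in> carrier H" and rDH: "coset_rep D \<in> carrier H"
    using G_subset_carrier by auto
  have "ga_conj H (inv (coset_rep C) \<otimes> coset_rep D) c
      = ga_conj H (inv (coset_rep C)) (ga_conj H (coset_rep C) c)"
    using rCH rDH eq by (simp add: ga_conj_conj)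
  also have "\<dots> = c" by (rule ga_conj_inv_conj[OF rCH c_in_grp_alg_carrier])
  finally have "inv (coset_rep C) \<otimes> coset_rep D \<in> I"
    using rC rD subgroup.m_closed[OF G_subgroup] subgroup.m_inv_closed[OF G_subgroup]
    by (simp add: inertia_def)
  then have "coset_rep D \<in> coset_rep C <#\<^bsub>H\<^esub> I"
    using rCH rDH by (force simp: l_coset_def)
  then have "coset_rep C <#\<^bsub>H\<^esub> I = coset_rep D <#\<^bsub>H\<^esub> I"
    by (rule l_repr_independence[OF _ rCH I_subgroup])
  then show "C = D" using coset_rep(3) C D by metis
qed

lemma bij_betw_I_cosets_conj_c:
  "bij_betw (\<lambda>C. ga_conj H (coset_rep C) c) I_cosets ((\<lambda>x. ga_conj H x c) ` G)"
proof (rule bij_betw_imageI[OF inj_on_conj_c_coset_rep], rule equalityI)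
  show "(\<lambda>C. ga_conj H (coset_rep C) c) ` I_cosets \<subseteq> (\<lambda>x. ga_conj H x c) ` G"
    using coset_rep(2) by auto
  show "(\<lambda>x. ga_conj H x c) ` G \<subseteq> (\<lambda>C. ga_conj H (coset_rep C) c) ` I_cosets"
  proof
    fix e assume "e \<in> (\<lambda>x. ga_conj H x c) ` G"
    then obtain x where x: "x \<in> G" "e = ga_conj H x c" by auto
    have C: "x <#\<^bsub>H\<^esub> I \<in> I_cosets" using x by (auto simp: I_cosets_def)
    then obtain h where h: "h \<in> I" "coset_rep (x <#\<^bsub>H\<^esub> I) = x \<otimes> h"
      using coset_rep(1) by (auto simp: l_coset_def)
    have "x \<in> carrier H" "h \<in> carrier H" using x h G_subset_carrier I_subset_carrier by auto
    then have "ga_conj H (coset_rep (x <#\<^bsub>H\<^esub> I)) c = ga_conj H x (ga_conj H h c)"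
      using h by (simp add: ga_conj_conj)
    also have "ga_conj H h c = c" using h by (simp add: inertia_def)
    finally show "e \<in> (\<lambda>C. ga_conj H (coset_rep C) c) ` I_cosets" using C x by force
  qed
qed

lemma b_eq_sum_b_mult_conj_c:
  "b = (\<lambda>g. \<Sum>e\<in>(\<lambda>x. ga_conj H x c) ` G. ga_mult H b e g)"
proof (rule ext)
  fix g
  have "b g = (\<Sum>C\<in>I_cosets. ga_conj H (coset_rep C) bt g)"
    by (subst b_eq_sum_conj_bt) simp
  also have "\<dots> = (\<Sum>C\<in>I_cosets. ga_mult H b (ga_conj H (coset_rep C) c) g)"
  proof (rule sum.cong[OF refl])
    fix C assume "C \<in> I_cosets"
    then have "coset_rep C \<in> carrier H" using coset_rep(2) G_subset_carrier by blast
    then show "ga_conj H (coset_rep C) bt g = ga_mult H b (ga_conj H (coset_rep C) c) g"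
      by (simp add: b_mult_conj_c)
  qed
  also have "\<dots> = (\<Sum>e\<in>(\<lambda>x. ga_conj H x c) ` G. ga_mult H b e g)"
    by (rule sum.reindex_bij_betw[OF bij_betw_I_cosets_conj_c])
  finally show "b g = (\<Sum>e\<in>(\<lambda>x. ga_conj H x c) ` G. ga_mult H b e g)" .
qed

text \<open>Write b(g) as the sum of (b e)(g) over the conjugates e of c by G, a set stable under
  conjugation by H. For g centralizing Q the summands are Q-invariant, so a conjugate of c
  fixed by Q contributes.\<close>
lemma ex_conj_c_fixed_brauer:
  assumes Q: "subgroup Q H" "card Q = p ^ n"
    and g: "g \<in> centralizer_in H G Q" "b g \<noteq> 0"
  shows "\<exists>x\<in>G. (\<forall>q\<in>Q. ga_conj H q (ga_conj H x c) = ga_conj H x c) \<and> ga_conj H x bt g \<noteq> 0"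
proof -
  define E where "E = (\<lambda>x. ga_conj H x c) ` G"
  have QH: "Q \<subseteq> carrier H" by (rule subgroup.subset[OF Q(1)])
  have gH: "g \<in> carrier H" and gcomm: "\<And>q. q \<in> Q \<Longrightarrow> g \<otimes> q = q \<otimes> g"
    using g G_subset_carrier by (auto simp: centralizer_in_def)
  have "b g = (\<Sum>e\<in>E. ga_mult H b e g)"
    unfolding E_def by (subst b_eq_sum_b_mult_conj_c) simp
  also have "\<dots> = (\<Sum>e\<in>{e\<in>E. \<forall>q\<in>Q. ga_conj H q e = e}. ga_mult H b e g)"
  proof (rule subgroup_sum_eq_sum_fixed_points[OF Q prime_p char_p])
    show "finite E" unfolding E_def using finite_subset[OF G_subset_carrier finite_carrier] by simp
  next
    fix q e assume q: "q \<in> Q" and e: "e \<in> E"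
    have qH: "q \<in> carrier H" using q QH by auto
    obtain x where x: "x \<in> G" "e = ga_conj H x c" using e by (auto simp: E_def)
    have xH: "x \<in> carrier H" using x G_subset_carrier by auto
    show "ga_conj H q e \<in> E"
      using conj_c_eq_conj_by_G[of "q \<otimes> x"] qH xH x by (auto simp: E_def ga_conj_conj)
    have "inv q \<otimes> g \<otimes> q = g" using qH gH gcomm[OF q] by (simp add: m_assoc)
    moreover have "ga_mult H b (ga_conj H q e) = ga_conj H q (ga_mult H b e)"
      using ga_conj_mult[OF qH, of b e] b_stable qH by simp
    ultimately show "ga_mult H b (ga_conj H q e) g = ga_mult H b e g"
      using qH gH by (simp add: ga_conj_def)
  next
    fix q r and e :: "'g \<Rightarrow> 'k" assume "q \<in> Q" "r \<in> Q"
    then have "q \<in> carrier H" "r \<in> carrier H" using QH by auto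
    then show "ga_conj H (q \<otimes> r) e = ga_conj H q (ga_conj H r e)" by (simp add: ga_conj_conj)
  qed (auto simp: E_def ga_conj_one[OF ga_conj_in_grp_alg_carrier])
  finally have "(\<Sum>e\<in>{e\<in>E. \<forall>q\<in>Q. ga_conj H q e = e}. ga_mult H b e g) \<noteq> 0" using g(2) by simp
  then obtain e where "e \<in> {e\<in>E. \<forall>q\<in>Q. ga_conj H q e = e}" "ga_mult H b e g \<noteq> 0"
    by (rule sum.not_neutral_contains_not_neutral)
  then obtain x where "x \<in> G" "\<forall>q\<in>Q. ga_conj H q (ga_conj H x c) = ga_conj H x c"
      "ga_mult H b (ga_conj H x c) g \<noteq> 0"
    by (auto simp: E_def)
  then show ?thesis using b_mult_conj_c G_subset_carrier by (metis subsetD)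
qed

lemma conjugate_subset_IH:
  assumes x: "x \<in> carrier H" and Q: "Q \<subseteq> carrier H"
    and fixes_conj_c: "\<And>q. q \<in> Q \<Longrightarrow> ga_conj H q (ga_conj H x c) = ga_conj H x c"
  shows "(\<lambda>q. inv x \<otimes> q \<otimes> x) ` Q \<subseteq> IH"
proof
  fix a assume "a \<in> (\<lambda>q. inv x \<otimes> q \<otimes> x) ` Q"
  then obtain q where q: "q \<in> Q" "a = inv x \<otimes> q \<otimes> x" by auto
  have qH: "q \<in> carrier H" using q Q by auto
  have "ga_conj H a c = ga_conj H (inv x) (ga_conj H q (ga_conj H x c))"
    using q qH x by (simp add: ga_conj_conj m_assoc)
  also have "\<dots> = c" using fixes_conj_c[OF q(1)] ga_conj_inv_conj[OF x c_in_grp_alg_carrier] by simp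
  finally show "a \<in> IH" using q qH x by (simp add: inertia_def)
qed

lemma ex_conjugate_brauer_bt_nonzero:
  assumes Q: "p_subgroup p Q H" and br: "brauer H G Q b \<noteq> (\<lambda>_. 0)"
  shows "\<exists>Q'. p_subgroup p Q' H \<and> card Q' = card Q \<and> Q' \<subseteq> IH \<and> brauer H I Q' bt \<noteq> (\<lambda>_. 0)"
proof -
  obtain n where Qsub: "subgroup Q H" and card: "card Q = p ^ n"
    using Q by (auto simp: p_subgroup_def)
  have QH: "Q \<subseteq> carrier H" by (rule subgroup.subset[OF Qsub])
  obtain g where g: "g \<in> centralizer_in H G Q" "b g \<noteq> 0"
    using br by (auto simp: brauer_neq_zero_iff)
  have gH: "g \<in> carrier H" and gcomm: "\<And>q. q \<in> Q \<Longrightarrow> g \<otimes> q = q \<otimes> g"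
    using g G_subset_carrier by (auto simp: centralizer_in_def)
  obtain x where x: "x \<in> G" and xfix: "\<And>q. q \<in> Q \<Longrightarrow> ga_conj H q (ga_conj H x c) = ga_conj H x c"
    and btg: "ga_conj H x bt g \<noteq> 0"
    using ex_conj_c_fixed_brauer[OF Qsub card g] by blast
  have xH: "x \<in> carrier H" using x G_subset_carrier by auto
  define Q' where "Q' = (\<lambda>q. inv x \<otimes> q \<otimes> x) ` Q"
  have Q': "subgroup Q' H" "card Q' = card Q"
    unfolding Q'_def by (rule conjugate_subgroup[OF Qsub xH])+
  have "Q' \<subseteq> IH" unfolding Q'_def by (rule conjugate_subset_IH[OF xH QH xfix])
  moreover have "brauer H I Q' bt \<noteq> (\<lambda>_. 0)"
  proof -
    define g' where "g' = inv x \<otimes> g \<otimes> x"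
    have btg': "bt g' \<noteq> 0" using btg xH gH by (simp add: ga_conj_def g'_def)
    then have "g' \<in> I" using bt_in_grp_alg_I by (auto simp: mem_grp_alg_iff)
    moreover have "g' \<otimes> a = a \<otimes> g'" if a: "a \<in> Q'" for a
    proof -
      obtain q where q: "q \<in> Q" "a = inv x \<otimes> q \<otimes> x" using a by (auto simp: Q'_def)
      have qH: "q \<in> carrier H" using q QH by auto
      have "g' \<otimes> a = inv x \<otimes> (g \<otimes> q) \<otimes> x" using q(2) qH xH gH by (simp add: g'_def m_assoc)
      also have "\<dots> = a \<otimes> g'" using q(2) qH xH gH gcomm[OF q(1)] by (simp add: g'_def m_assoc)
      finally show ?thesis .
    qed
    ultimately show ?thesis using btg' by (auto simp: brauer_neq_zero_iff centralizer_in_def)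
  qed
  ultimately show ?thesis using Q' card by (auto simp: p_subgroup_def)
qed

text \<open>c kG c lies in kI: for g outside I, c g c = c (^g c) g vanishes since ^g c is orthogonal to c.\<close>
lemma c_corner_in_grp_alg_I:
  assumes a: "a \<in> grp_alg H G"
  shows "ga_mult H (ga_mult H c a) c \<in> grp_alg H I"
proof -
  have finG: "finite G" using finite_subset[OF G_subset_carrier finite_carrier] .
  have term_in_I: "(\<lambda>x. a g * ga_mult H (ga_mult H c (ga_delta g)) c x) \<in> grp_alg H I"
    if g: "g \<in> G" for g
  proof (cases "g \<in> I")
    case True
    then have "ga_mult H (ga_mult H c (ga_delta g)) c \<in> grp_alg H I"
      by (intro ga_mult_closed[OF I_subgroup] c_in_grp_alg_I ga_delta_in_grp_alg)
    then show ?thesis by (auto simp: mem_grp_alg_iff)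
  next
    case False
    have gH: "g \<in> carrier H" using g G_subset_carrier by auto
    have "ga_conj H \<one> c \<noteq> ga_conj H g c"
      using False g ga_conj_one[OF c_in_grp_alg_carrier] by (auto simp: inertia_def)
    then have "ga_mult H c (ga_conj H g c) = (\<lambda>_. 0)"
      using conj_c_mult_conj_c[OF one_closed gH] ga_conj_one[OF c_in_grp_alg_carrier] by simp
    moreover have "ga_mult H (ga_mult H c (ga_delta g)) c
        = ga_mult H (ga_mult H c (ga_conj H g c)) (ga_delta g)"
      by (simp add: ga_mult_assoc ga_mult_delta_commute[OF gH])
    ultimately show ?thesis by (simp add: mem_grp_alg_iff)
  qed
  have "ga_mult H (ga_mult H c a) c = ga_mult H (ga_mult H c (\<lambda>x. \<Sum>g\<in>G. a g * ga_delta g x)) c"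
    using grp_alg_eq_sum_delta[OF a finG] by simp
  also have "\<dots> = (\<lambda>x. \<Sum>g\<in>G. a g * ga_mult H (ga_mult H c (ga_delta g)) c x)"
    by (simp add: ga_mult_sum_right ga_mult_sum_left ga_mult_scale_right ga_mult_scale_left)
  also have "\<dots> \<in> grp_alg H I"
    using term_in_I by (auto simp: mem_grp_alg_iff intro: sum.neutral)
  finally show ?thesis .
qed

lemma bt_corner_in_grp_alg_I:
  assumes "a \<in> grp_alg H G"
  shows "ga_mult H (ga_mult H bt a) bt \<in> grp_alg H I"
proof -
  have "ga_mult H (ga_mult H bt a) bt = ga_mult H (ga_mult H bt (ga_mult H (ga_mult H c a) c)) bt"
    by (simp add: ga_mult_assoc[symmetric] bt_mult_c) (simp add: ga_mult_assoc c_mult_bt)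
  also have "\<dots> \<in> grp_alg H I"
    by (intro ga_mult_closed[OF I_subgroup] bt_in_grp_alg_I c_corner_in_grp_alg_I assms)
  finally show ?thesis .
qed

lemma bt_in_fixed_block_alg:
  assumes "P \<subseteq> IH"
  shows "bt \<in> ga_fixed H P (ga_block_alg H I bt)"
proof -
  have "bt \<in> ga_block_alg H I bt"
    unfolding ga_block_alg_def using bt_idem bt_in_grp_alg_I by force
  then show ?thesis using IH_fixes_bt assms by (auto simp: ga_fixed_def)
qed

text \<open>An idempotent i of (kI bt)^P satisfies i = bt i bt, so the corner i (kG b)^P i lies in
  bt (kG b)^P bt, which is contained in (kI bt)^P.\<close>
lemma prim_idem_fixed_block_alg:
  assumes prim: "prim_idem H (ga_fixed H P (ga_block_alg H I bt)) i"
  shows "prim_idem H (ga_fixed H P (ga_block_alg H G b)) i"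
proof (rule prim_idem_corner[OF prim])
  obtain a where a: "a \<in> grp_alg H I" "i = ga_mult H a bt" and i_fixed: "\<forall>q\<in>P. ga_conj H q i = i"
    using prim_idemD(1)[OF prim] unfolding ga_fixed_def ga_block_alg_def by blast
  have bt_i: "ga_mult H bt i = i"
    using a ga_center_commute[OF bt_center a(1)] bt_idem by (metis ga_mult_assoc)
  have i_bt: "ga_mult H i bt = i" using a by (simp add: ga_mult_assoc bt_idem)
  have "i \<in> grp_alg H G"
    using ga_mult_closed[OF I_subgroup a(1) bt_in_grp_alg_I] a(2) I_subset_G grp_alg_mono by blast
  moreover have "ga_mult H i b = i" using a by (simp add: ga_mult_assoc bt_mult_b)
  ultimately show "i \<in> ga_fixed H P (ga_block_alg H G b)"
    using i_fixed unfolding ga_fixed_def ga_block_alg_def by force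
  fix f assume f: "f \<in> ga_fixed H P (ga_block_alg H G b)"
    and if_f: "ga_mult H i f = f" and fi_f: "ga_mult H f i = f"
  obtain a' where "a' \<in> grp_alg H G" "f = ga_mult H a' b" and f_fixed: "\<forall>q\<in>P. ga_conj H q f = f"
    using f unfolding ga_fixed_def ga_block_alg_def by blast
  then have fG: "f \<in> grp_alg H G"
    using ga_mult_closed[OF G_subgroup] ga_center_subset[OF b_center] by simp
  have f_corner: "f = ga_mult H (ga_mult H bt f) bt"
    using if_f fi_f bt_i i_bt by (metis ga_mult_assoc)
  then have "f \<in> grp_alg H I" using bt_corner_in_grp_alg_I[OF fG] by simp
  moreover have "ga_mult H f bt = f" using f_corner by (metis ga_mult_assoc bt_idem)
  ultimately show "f \<in> ga_fixed H P (ga_block_alg H I bt)"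
    using f_fixed unfolding ga_fixed_def ga_block_alg_def by force
qed

end

theorem mainTheorem9:
  fixes H :: "'g monoid" and G N :: "'g set" and p :: nat
    and b c bt :: "'g \<Rightarrow> 'k::alg_closed_field"
  assumes "prime p" and "CHAR('k) = p"
    and "group H" and "finite (carrier H)"
    and "G \<lhd> H" and "N \<lhd> H" and "N \<subseteq> G"
    and "is_block H G b" and "\<forall>h\<in>carrier H. ga_conj H h b = b"
    and "is_block H N c" and "ga_mult H b c \<noteq> (\<lambda>_. 0)"
    and "is_block H (inertia H G c) bt"
    and "ga_mult H bt c \<noteq> (\<lambda>_. 0)"
    and "b = ga_trace H G (inertia H G c) bt"
  shows "\<exists>P i. p_subgroup p P H \<and> P \<subseteq> inertia H (carrier H) c
      \<and> prim_idem H (ga_fixed H P (ga_block_alg H (inertia H G c) bt)) i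
      \<and> max_brauer_pgroup p H (carrier H) G b P
      \<and> max_brauer_pgroup p H (inertia H (carrier H) c) (inertia H G c) bt P
      \<and> prim_idem H (ga_fixed H P (ga_block_alg H G b)) i
      \<and> brauer H G P i \<noteq> (\<lambda>_. 0)"
proof -
  interpret fong_setting H G N p b c bt
    by (intro fong_setting.intro finite_group.intro finite_group_axioms.intro
        fong_setting_axioms.intro assms)
  obtain P where P: "p_subgroup p P H" "P \<subseteq> IH" "brauer H I P bt \<noteq> (\<lambda>_. 0)"
    and P_max: "\<And>Q. p_subgroup p Q H \<Longrightarrow> Q \<subseteq> IH \<Longrightarrow> brauer H I Q bt \<noteq> (\<lambda>_. 0) \<Longrightarrow> card Q \<le> card P"
    using ex_max_card_brauer_pgroup[OF subgroup.one_closed[OF IH_subgroup]]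
      brauer_one_subgroup[OF I_subset_carrier bt_in_grp_alg_I] bt_nonzero by metis
  have "max_brauer_pgroup p H (carrier H) G b P"
  proof (rule max_brauer_pgroupI)
    show "brauer H G P b \<noteq> (\<lambda>_. 0)" by (rule brauer_b_nonzero[OF P])
    show "card Q \<le> card P" if "p_subgroup p Q H" "brauer H G Q b \<noteq> (\<lambda>_. 0)" for Q
      using ex_conjugate_brauer_bt_nonzero[OF that] P_max by metis
  qed (use P subgroup.subset[OF IH_subgroup] in auto)
  moreover have "max_brauer_pgroup p H IH I bt P" by (rule max_brauer_pgroupI[OF P P_max])
  moreover obtain i where "prim_idem H (ga_fixed H P (ga_block_alg H I bt)) i" "brauer H I P i \<noteq> (\<lambda>_. 0)"
    using ex_prim_idem_brauer_nonzero[OF bt_in_fixed_block_alg[OF P(2)] _ P(3)] bt_idem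
    by (auto simp: ga_idem_def)
  ultimately show ?thesis
    using P prim_idem_fixed_block_alg brauer_nonzero_mono[OF I_subset_G] by blast
qed

end
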